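(* Fix a finite set $\Omega$, an integer $k\ge2$ and a finite set $\Psi$ of functions $\Omega^k\to(0,\infty)$. For every $\varepsilon>0$ and $R>0$ there is $\varepsilon'>0$ such that the following holds. Let $G$ be any factor graph, $U\subset V(G)$ a cavity with $|U|\le R$ and $|\partial U|\le R$, and $Y$ the set of variable nodes at distance $2$ from $U$ (in the bipartite graph of $G$), and suppose every constraint node $a$ with $\partial a\cap U\ne\emptyset$ has $\psi_a\in\Psi$. Suppose $\big\|\mu_{G\setminus\partial U,Y}-\bigotimes_{y\in Y}\mu_{G\setminus\partial U,y}\big\|_{TV}<\varepsilon'$. Then $\sum_{\sigma\in\Omega^U}|\bar\mu_{G,U}(\sigma)-\mu_{G,U}(\sigma)|<\varepsilon$. Moreover, if the hypothesis holds for a cavity $U=\{x\}$ consisting of a single variable node $x$ with $|\partial x|\le R$, then, letting $\mu$ denote the standard messages $(\mu_{G,y\to a},\mu_{G,a\to y})$ and $\hat\mu=\mathrm{BP}(\mu)$, $\sum_{a\in\partial x}\sum_{\sigma\in\Omega}\big(|\mu_{G,x\to a}(\sigma)-\hat\mu_{G,x\to a}(\sigma)|+|\mu_{G,a\to x}(\sigma)-\hat\mu_{G,a\to x}(\sigma)|\big)<\varepsilon$.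
   Context: A factor graph $G=(V,F,(\partial a)_{a\in F},(\psi_a)_{a\in F})$ has variable nodes $V$, constraint nodes $F$, for each $a$ a tuple $\partial a\in V^{k_a}$ of neighbours and a weight function $\psi_a:\Omega^{k_a}\to(0,\infty)$; its Gibbs distribution is $\mu_G(\sigma)\propto\prod_{a\in F}\psi_a(\sigma|_{\partial a})$ and $\mu_{G,U}$ denotes the marginal on $U\subset V$. $G$ induces a bipartite graph joining $a$ to its neighbours $\partial a$ (also viewed as a set); $\partial x$ is the set of constraint nodes adjacent to $x$. $\|p-q\|_{TV}=\frac12\sum|p-q|$. $\emptyset\ne U\subset V$ is a cavity if (CAV1) the induced subgraph $G[U]$ (variable nodes $U$ and all $a$ with $\partial a\subset U$) is acyclic; (CAV2) every $a$ with $\partial a\not\subset U$ has $|\partial a\cap U|\le1$; (CAV3) for distinct $a,b$ with $\partial a\cap U\ne\emptyset\ne\partial b\cap U$, $(\partial a\cap\partial b)\setminus U=\emptyset$. $\partial U$ is the set of $a$ with $\partial a\cap U\ne\emptyset\ne\partial a\setminus U$; $x_{a\to U}$ is the unique node of $U\cap\partial a$. $G\setminus\partial U$ is the factor graph obtained by deleting the constraint nodes in $\partial U$. Standard messages (unconditioned): $\mu_{G,a\to x}(\tau)\propto\sum_{\sigma}\mathbf 1\{\sigma_x=\tau\}\prod_{b\in F\setminus(\partial x\setminus\{a\})}\psi_b(\sigma|_{\partial b})$ (the marginal of $x$ after deleting all constraint nodes of $\partial x$ except $a$) and $\mu_{G,x\to a}(\tau)\propto\sum_\sigma\mathbf 1\{\sigma_x=\tau\}\prod_{b\in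 F\setminus\{a\}}\psi_b(\sigma|_{\partial b})$. $\bar\mu_{G,U}(\sigma)\propto\mu_{G[U]}(\sigma)\prod_{a\in\partial U}\mu_{G,a\to x_{a\to U}}(\sigma_{x_{a\to U}})$ for $\sigma\in\Omega^U$, where $\mu_{G[U]}(\sigma)\propto\prod_{\partial a\subset U}\psi_a(\sigma|_{\partial a})$. The Belief Propagation operator maps messages $\nu=(\nu_{x\to a},\nu_{a\to x})$ to $\hat\nu$ with $\hat\nu_{x\to a}(\sigma)\propto\prod_{b\in\partial x\setminus a}\nu_{b\to x}(\sigma)$ and $\hat\nu_{a\to x}(\sigma)\propto\sum_{\tau\in\Omega^{\partial a}}\mathbf 1\{\tau_x=\sigma\}\psi_a(\tau)\prod_{y\in\partial a\setminus x}\nu_{y\to a}(\tau_y)$. *)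

theory Defs
  imports Complex_Main "HOL-Library.FuncSet"
begin

text \<open>Variable nodes of type 'v, constraint nodes of type 'f, spins of type 'c
  (the finite set Omega is rendered as a finite type). nb a is the tuple of neighbours of a,
  psi a is its weight function on tuples (meaningful on tuples of length length (nb a)).\<close>

record ('v,'f,'c) fg =
  vars :: "'v set"
  facs :: "'f set"
  nb   :: "'f \<Rightarrow> 'v list"
  psi  :: "'f \<Rightarrow> 'c list \<Rightarrow> real"

definition fg_wf :: "('v,'f,'c) fg \<Rightarrow> bool" where
  "fg_wf G \<longleftrightarrow> finite (vars G) \<and> finite (facs G) \<and>
     (\<forall>a\<in>facs G. set (nb G a) \<subseteq> vars G \<and>
        (\<forall>\<tau>. length \<tau> = length (nb G a) \<longrightarrow> psi G a \<tau> > 0))"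

definition configs :: "'v set \<Rightarrow> ('v \<Rightarrow> 'c) set" where
  "configs U = PiE U (\<lambda>_. UNIV)"

definition weight :: "('v,'f,'c) fg \<Rightarrow> ('v \<Rightarrow> 'c) \<Rightarrow> real" where
  "weight G \<sigma> = (\<Prod>a\<in>facs G. psi G a (map \<sigma> (nb G a)))"

definition gibbs :: "('v,'f,'c) fg \<Rightarrow> ('v \<Rightarrow> 'c) \<Rightarrow> real" where
  "gibbs G \<sigma> = weight G \<sigma> / (\<Sum>\<tau>\<in>configs (vars G). weight G \<tau>)"

definition marg :: "('v,'f,'c) fg \<Rightarrow> 'v set \<Rightarrow> ('v \<Rightarrow> 'c) \<Rightarrow> real" where
  "marg G U \<tau> = (\<Sum>\<sigma>\<in>configs (vars G). if restrict \<sigma> U = \<tau> then gibbs G \<sigma> else 0)"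

definition marg1 :: "('v,'f,'c) fg \<Rightarrow> 'v \<Rightarrow> 'c \<Rightarrow> real" where
  "marg1 G x c = (\<Sum>\<sigma>\<in>configs (vars G). if \<sigma> x = c then gibbs G \<sigma> else 0)"

definition dvar :: "('v,'f,'c) fg \<Rightarrow> 'v \<Rightarrow> 'f set" where
  "dvar G x = {a\<in>facs G. x \<in> set (nb G a)}"

definition del_facs :: "('v,'f,'c) fg \<Rightarrow> 'f set \<Rightarrow> ('v,'f,'c) fg" where
  "del_facs G D = G\<lparr>facs := facs G - D\<rparr>"

definition induced :: "('v,'f,'c) fg \<Rightarrow> 'v set \<Rightarrow> ('v,'f,'c) fg" where
  "induced G U = G\<lparr>vars := U, facs := {a\<in>facs G. set (nb G a) \<subseteq> U}\<rparr>"

definition badj :: "('v,'f,'c) fg \<Rightarrow> 'v + 'f \<Rightarrow> 'v + 'f \<Rightarrow> bool" where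
  "badj G u w \<longleftrightarrow> (\<exists>x a. a \<in> facs G \<and> x \<in> vars G \<and> x \<in> set (nb G a) \<and>
       ((u = Inl x \<and> w = Inr a) \<or> (u = Inr a \<and> w = Inl x)))"

definition has_cycle :: "('v,'f,'c) fg \<Rightarrow> bool" where
  "has_cycle G \<longleftrightarrow> (\<exists>cs. length cs \<ge> 3 \<and> distinct cs \<and>
       (\<forall>i<length cs. badj G (cs ! i) (cs ! (Suc i mod length cs))))"

definition cavity :: "('v,'f,'c) fg \<Rightarrow> 'v set \<Rightarrow> bool" where
  "cavity G U \<longleftrightarrow> U \<noteq> {} \<and> U \<subseteq> vars G \<and>
     \<not> has_cycle (induced G U) \<and>
     (\<forall>a\<in>facs G. \<not> set (nb G a) \<subseteq> U \<longrightarrow> card (set (nb G a) \<inter> U) \<le> 1) \<and>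
     (\<forall>a\<in>facs G. \<forall>b\<in>facs G. a \<noteq> b \<and> set (nb G a) \<inter> U \<noteq> {} \<and> set (nb G b) \<inter> U \<noteq> {}
         \<longrightarrow> (set (nb G a) \<inter> set (nb G b)) - U = {})"

definition bdry :: "('v,'f,'c) fg \<Rightarrow> 'v set \<Rightarrow> 'f set" where
  "bdry G U = {a\<in>facs G. set (nb G a) \<inter> U \<noteq> {} \<and> set (nb G a) - U \<noteq> {}}"

definition xto :: "('v,'f,'c) fg \<Rightarrow> 'f \<Rightarrow> 'v set \<Rightarrow> 'v" where
  "xto G a U = (THE x. x \<in> U \<inter> set (nb G a))"

definition msg_fv :: "('v,'f,'c) fg \<Rightarrow> 'f \<Rightarrow> 'v \<Rightarrow> 'c \<Rightarrow> real" where
  "msg_fv G a x c = marg1 (del_facs G (dvar G x - {a})) x c"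

definition msg_vf :: "('v,'f,'c) fg \<Rightarrow> 'v \<Rightarrow> 'f \<Rightarrow> 'c \<Rightarrow> real" where
  "msg_vf G x a c = marg1 (del_facs G {a}) x c"

definition barmu :: "('v,'f,'c) fg \<Rightarrow> 'v set \<Rightarrow> ('v \<Rightarrow> 'c) \<Rightarrow> real" where
  "barmu G U \<sigma> =
     (let w = (\<lambda>\<tau>. gibbs (induced G U) \<tau> *
                    (\<Prod>a\<in>bdry G U. msg_fv G a (xto G a U) (\<tau> (xto G a U))))
      in w \<sigma> / (\<Sum>\<tau>\<in>configs U. w \<tau>))"

definition dist2 :: "('v,'f,'c) fg \<Rightarrow> 'v set \<Rightarrow> 'v set" where
  "dist2 G U = {y\<in>vars G. y \<notin> U \<and> (\<exists>a\<in>facs G. y \<in> set (nb G a) \<and> set (nb G a) \<inter> U \<noteq> {})}"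

definition tv_prod :: "('v,'f,'c) fg \<Rightarrow> 'v set \<Rightarrow> real" where
  "tv_prod G Y = 1/2 * (\<Sum>\<tau>\<in>configs Y. \<bar>marg G Y \<tau> - (\<Prod>y\<in>Y. marg1 G y (\<tau> y))\<bar>)"

definition bp_vf :: "('v,'f,'c) fg \<Rightarrow> ('f \<Rightarrow> 'v \<Rightarrow> 'c \<Rightarrow> real) \<Rightarrow> 'v \<Rightarrow> 'f \<Rightarrow> 'c \<Rightarrow> real" where
  "bp_vf G nu_fv x a c =
     (let w = (\<lambda>s. \<Prod>b\<in>dvar G x - {a}. nu_fv b x s) in w c / (\<Sum>s\<in>UNIV. w s))"

definition bp_fv :: "('v,'f,'c) fg \<Rightarrow> ('v \<Rightarrow> 'f \<Rightarrow> 'c \<Rightarrow> real) \<Rightarrow> 'f \<Rightarrow> 'v \<Rightarrow> 'c \<Rightarrow> real" where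
  "bp_fv G nu_vf a x c =
     (let w = (\<lambda>s. \<Sum>\<tau>\<in>configs (set (nb G a)).
                   if \<tau> x = s then psi G a (map \<tau> (nb G a)) *
                        (\<Prod>y\<in>set (nb G a) - {x}. nu_vf y a (\<tau> y)) else 0)
      in w c / (\<Sum>s\<in>UNIV. w s))"

definition psi_in :: "('v,'f,'c) fg \<Rightarrow> nat \<Rightarrow> ('c list \<Rightarrow> real) set \<Rightarrow> 'f \<Rightarrow> bool" where
  "psi_in G k Psi a \<longleftrightarrow> length (nb G a) = k \<and>
     (\<exists>\<psi>\<in>Psi. \<forall>\<tau>. length \<tau> = k \<longrightarrow> psi G a \<tau> = \<psi> \<tau>)"

end

theory Submission
  imports Defs
begin

text \<open>Split the factors of \<open>G\<close> into those inside the cavity \<open>U\<close>, the boundary factors \<open>\<partial>U\<close>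
  and the rest. Summing out everything outside \<open>U\<close> except the second neighbourhood \<open>Y\<close> expresses
  the marginal on \<open>U\<close>, and every message into a node of \<open>U\<close>, exactly through the law \<open>\<nu>\<close> of \<open>Y\<close> in
  \<open>G \<setminus> \<partial>U\<close>, each boundary factor contributing a factor in \<open>[m, M]\<close>. Replacing \<open>\<nu>\<close> by the
  product \<open>\<pi>\<close> of its one-site marginals costs a multiple of \<open>\<parallel>\<nu> - \<pi>\<parallel>\<^sub>T\<^sub>V\<close>. Under \<open>\<pi>\<close> the
  boundary factors become independent (CAV3: their outside neighbourhoods are disjoint), so the
  true marginal \<open>marg G U\<close> and the cavity approximation \<open>barmu G U\<close> turn into the same explicit
  expression; likewise the standard messages at a single node and their BP updates. Normalising
  preserves these \<open>L\<^sup>1\<close> bounds because all normalising constants are bounded below in terms of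
  \<open>m\<close>, \<open>M\<close>, \<open>R\<close>, \<open>k\<close> and \<open>|\<Omega>|\<close>.\<close>

section \<open>Configurations and product distributions\<close>

lemma finite_configs [simp]: "finite U \<Longrightarrow> finite (configs U :: ('v \<Rightarrow> 'c::finite) set)"
  unfolding configs_def by (intro finite_PiE) auto

lemma configs_iff: "\<sigma> \<in> configs U \<longleftrightarrow> (\<forall>v. v \<notin> U \<longrightarrow> \<sigma> v = undefined)"
  unfolding configs_def PiE_def extensional_def by auto

lemma restrict_in_configs [simp]: "restrict \<sigma> U \<in> configs U"
  unfolding configs_iff by auto

lemma configs_nonempty: "configs U \<noteq> {}"
  using restrict_in_configs by blast

lemma card_configs:
  "finite A \<Longrightarrow> card (configs A :: ('v \<Rightarrow> 'c::finite) set) = card (UNIV :: 'c set) ^ card A"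
  unfolding configs_def by (simp add: card_PiE)

lemma sum_configs_Un:
  fixes F :: "('v \<Rightarrow> 'c) \<Rightarrow> real"
  assumes "finite A" "finite B" "A \<inter> B = {}"
  shows "(\<Sum>\<rho>\<in>configs (A \<union> B). F \<rho>) = (\<Sum>\<sigma>\<in>configs A. \<Sum>\<tau>\<in>configs B. F (override_on \<tau> \<sigma> A))"
proof -
  have "(\<Sum>\<sigma>\<in>configs A. \<Sum>\<tau>\<in>configs B. F (override_on \<tau> \<sigma> A))
      = (\<Sum>(\<sigma>,\<tau>)\<in>configs A \<times> configs B. F (override_on \<tau> \<sigma> A))"
    by (rule sum.cartesian_product)
  also have "\<dots> = (\<Sum>\<rho>\<in>configs (A \<union> B). F \<rho>)"
    using assms
    by (intro sum.reindex_bij_witness[of _ "\<lambda>\<rho>. (restrict \<rho> A, restrict \<rho> B)"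
          "\<lambda>(\<sigma>,\<tau>). override_on \<tau> \<sigma> A"])
       (auto simp: configs_iff override_on_def fun_eq_iff)
  finally show ?thesis by simp
qed

definition const_config :: "'v set \<Rightarrow> 'c \<Rightarrow> 'v \<Rightarrow> 'c" where
  "const_config U c = restrict (\<lambda>_. c) U"

lemma sum_configs_singleton:
  fixes F :: "('v \<Rightarrow> 'c::finite) \<Rightarrow> real"
  shows "(\<Sum>\<tau>\<in>configs {y}. F \<tau>) = (\<Sum>c\<in>UNIV. F (const_config {y} c))"
proof -
  have "const_config {y} (\<tau> y) = \<tau>" if "\<tau> \<in> configs {y}" for \<tau> :: "'v \<Rightarrow> 'c"
    using that by (auto simp: const_config_def configs_iff fun_eq_iff)
  then show ?thesis
    by (intro sum.reindex_bij_witness[of _ "const_config {y}" "\<lambda>\<tau>. \<tau> y"])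
       (auto simp: const_config_def)
qed

lemma sum_configs_singleton_indicator:
  fixes F :: "('v \<Rightarrow> 'c::finite) \<Rightarrow> real"
  shows "(\<Sum>\<sigma>\<in>configs {x}. F \<sigma> * (if \<sigma> x = c then 1 else 0)) = F (const_config {x} c)"
  unfolding sum_configs_singleton
  by (simp add: const_config_def if_distrib[of "(*) _"] cong: if_cong)

lemma sum_mult_indicator:
  fixes f :: "_ \<Rightarrow> real"
  shows "finite A \<Longrightarrow> a \<in> A \<Longrightarrow> (\<Sum>x\<in>A. f x * (if x = a then 1 else 0)) = f a"
  by (simp add: if_distrib[of "(*) _"] sum.delta' cong: if_cong)

lemma sum_indicator_total:
  fixes F :: "_ \<Rightarrow> real"
  assumes "finite S"
  shows "(\<Sum>c\<in>(UNIV::'c::finite set). \<Sum>\<rho>\<in>S. F \<rho> * (if \<rho> z = c then 1 else 0)) = (\<Sum>\<rho>\<in>S. F \<rho>)"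
  by (subst sum.swap) (simp add: if_distrib[of "(*) _"] sum.delta cong: if_cong)

lemma sum_fibres:
  fixes g \<Phi> :: "_ \<Rightarrow> real"
  assumes "finite S" "finite T" "\<And>\<rho>. \<rho> \<in> S \<Longrightarrow> h \<rho> \<in> T"
  shows "(\<Sum>\<tau>\<in>T. (\<Sum>\<rho>\<in>S. if h \<rho> = \<tau> then g \<rho> else 0) * \<Phi> \<tau>) = (\<Sum>\<rho>\<in>S. g \<rho> * \<Phi> (h \<rho>))"
proof -
  have "(\<Sum>\<tau>\<in>T. (\<Sum>\<rho>\<in>S. if h \<rho> = \<tau> then g \<rho> else 0) * \<Phi> \<tau>)
      = (\<Sum>\<tau>\<in>T. \<Sum>\<rho>\<in>S. if h \<rho> = \<tau> then g \<rho> * \<Phi> \<tau> else 0)"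
    by (simp add: sum_distrib_right if_distrib[of "\<lambda>t. t * _"] cong: if_cong)
  also have "\<dots> = (\<Sum>\<rho>\<in>S. \<Sum>\<tau>\<in>T. if h \<rho> = \<tau> then g \<rho> * \<Phi> \<tau> else 0)"
    by (rule sum.swap)
  also have "\<dots> = (\<Sum>\<rho>\<in>S. g \<rho> * \<Phi> (h \<rho>))"
    using assms by (intro sum.cong refl) (simp add: sum.delta)
  finally show ?thesis .
qed

lemma sum_indicator_update_invariant:
  fixes F :: "('v \<Rightarrow> 'c) \<Rightarrow> real"
  assumes "finite (configs U :: ('v \<Rightarrow> 'c) set)" and "x \<in> U"
    and inv: "\<And>\<sigma> t. \<sigma> \<in> configs U \<Longrightarrow> F (\<sigma>(x := t)) = F \<sigma>"
  shows "(\<Sum>\<sigma>\<in>configs U. F \<sigma> * (if \<sigma> x = s then 1 else 0))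
       = (\<Sum>\<sigma>\<in>configs U. F \<sigma> * (if \<sigma> x = s' then 1 else 0))"
proof -
  have filter: "(\<Sum>\<sigma>\<in>configs U. F \<sigma> * (if \<sigma> x = t then 1 else 0)) = (\<Sum>\<sigma>\<in>{\<sigma>\<in>configs U. \<sigma> x = t}. F \<sigma>)"
    for t
    using sum.inter_filter[OF assms(1), of F "\<lambda>\<sigma>. \<sigma> x = t"]
    by (simp add: if_distrib[of "(*) _"] cong: if_cong)
  have "(\<Sum>\<sigma>\<in>{\<sigma>\<in>configs U. \<sigma> x = s}. F \<sigma>) = (\<Sum>\<sigma>\<in>{\<sigma>\<in>configs U. \<sigma> x = s'}. F \<sigma>)"
    using assms(2) inv
    by (intro sum.reindex_bij_witness[of _ "\<lambda>\<sigma>. \<sigma>(x := s)" "\<lambda>\<sigma>. \<sigma>(x := s')"])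
       (auto simp: configs_iff fun_eq_iff)
  then show ?thesis unfolding filter .
qed

definition determined_by :: "'v set \<Rightarrow> (('v \<Rightarrow> 'c) \<Rightarrow> 'b) \<Rightarrow> bool" where
  "determined_by A f \<longleftrightarrow> (\<forall>\<rho> \<rho>'. (\<forall>y\<in>A. \<rho> y = \<rho>' y) \<longrightarrow> f \<rho> = f \<rho>')"

lemma determined_byD: "determined_by A f \<Longrightarrow> (\<And>y. y \<in> A \<Longrightarrow> \<rho> y = \<rho>' y) \<Longrightarrow> f \<rho> = f \<rho>'"
  unfolding determined_by_def by blast

lemma determined_by_restrict: "determined_by A f \<Longrightarrow> f (restrict \<rho> A) = f \<rho>"
  unfolding determined_by_def by auto

lemma determined_by_const [simp]: "determined_by A (\<lambda>_. c)"
  unfolding determined_by_def by simp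

lemma determined_by_mult:
  "determined_by A f \<Longrightarrow> determined_by A g \<Longrightarrow> determined_by A (\<lambda>\<rho>. f \<rho> * g \<rho>)"
  unfolding determined_by_def by metis

definition prod_dist :: "'v set \<Rightarrow> ('v \<Rightarrow> 'c \<Rightarrow> real) \<Rightarrow> ('v \<Rightarrow> 'c) \<Rightarrow> real" where
  "prod_dist S p \<tau> = (\<Prod>y\<in>S. p y (\<tau> y))"

lemma sum_prod_dist:
  assumes "finite S" "\<And>y. y \<in> S \<Longrightarrow> (\<Sum>c\<in>UNIV. p y (c::'c::finite)) = 1"
  shows "(\<Sum>\<tau>\<in>configs S. prod_dist S p \<tau>) = 1"
  using assms unfolding prod_dist_def configs_def by (subst prod_sum_PiE[symmetric]) auto

lemma prod_dist_override_on:
  assumes "A \<subseteq> Y" "finite Y"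
  shows "prod_dist Y p (override_on \<tau> \<sigma> A) = prod_dist A p \<sigma> * prod_dist (Y - A) p \<tau>"
proof -
  have "prod_dist Y p (override_on \<tau> \<sigma> A)
      = (\<Prod>y\<in>Y - A. p y (override_on \<tau> \<sigma> A y)) * (\<Prod>y\<in>A. p y (override_on \<tau> \<sigma> A y))"
    unfolding prod_dist_def using assms by (rule prod.subset_diff)
  also have "\<dots> = prod_dist (Y - A) p \<tau> * prod_dist A p \<sigma>"
    unfolding prod_dist_def by (intro arg_cong2[where f = "(*)"] prod.cong) auto
  finally show ?thesis by simp
qed

context
  fixes Y :: "'v set" and p :: "'v \<Rightarrow> 'c::finite \<Rightarrow> real"
  assumes finite_Y: "finite Y" and p_sum: "\<And>y. y \<in> Y \<Longrightarrow> (\<Sum>c\<in>UNIV. p y c) = 1"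
begin

lemma expectation_prod_dist_split:
  assumes "A \<subseteq> Y" "determined_by A f" "determined_by (Y - A) g"
  shows "(\<Sum>\<tau>\<in>configs Y. prod_dist Y p \<tau> * (f \<tau> * g \<tau>)) =
         (\<Sum>\<tau>\<in>configs A. prod_dist A p \<tau> * f \<tau>) * (\<Sum>\<tau>\<in>configs (Y - A). prod_dist (Y - A) p \<tau> * g \<tau>)"
proof -
  have fin: "finite A" "finite (Y - A)" using assms(1) finite_Y finite_subset by auto
  have Y: "Y = A \<union> (Y - A)" using assms(1) by auto
  have "f (override_on \<tau> \<sigma> A) = f \<sigma>" "g (override_on \<tau> \<sigma> A) = g \<tau>" for \<sigma> \<tau> :: "'v \<Rightarrow> 'c"
    by (auto intro: determined_byD[OF assms(2)] determined_byD[OF assms(3)])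
  then have "(\<Sum>\<tau>\<in>configs Y. prod_dist Y p \<tau> * (f \<tau> * g \<tau>))
      = (\<Sum>\<sigma>\<in>configs A. \<Sum>\<tau>\<in>configs (Y - A). prod_dist A p \<sigma> * f \<sigma> * (prod_dist (Y - A) p \<tau> * g \<tau>))"
    using fin assms(1) finite_Y
    by (subst Y, subst sum_configs_Un) (auto simp: prod_dist_override_on[symmetric] mult_ac)
  then show ?thesis by (simp add: sum_product)
qed

lemma expectation_prod_dist_marginal:
  assumes "A \<subseteq> Y" "determined_by A f"
  shows "(\<Sum>\<tau>\<in>configs Y. prod_dist Y p \<tau> * f \<tau>) = (\<Sum>\<tau>\<in>configs A. prod_dist A p \<tau> * f \<tau>)"
  using expectation_prod_dist_split[OF assms, of "\<lambda>_. 1"] sum_prod_dist[of "Y - A" p]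
    finite_Y p_sum by simp

lemma expectation_prod_dist_mult:
  assumes "A \<subseteq> Y" "determined_by A f" "determined_by (Y - A) g"
  shows "(\<Sum>\<tau>\<in>configs Y. prod_dist Y p \<tau> * (f \<tau> * g \<tau>)) =
         (\<Sum>\<tau>\<in>configs Y. prod_dist Y p \<tau> * f \<tau>) * (\<Sum>\<tau>\<in>configs Y. prod_dist Y p \<tau> * g \<tau>)"
  using expectation_prod_dist_split[OF assms] expectation_prod_dist_marginal[OF assms(1,2)]
    expectation_prod_dist_marginal[OF _ assms(3)] by simp

lemma expectation_prod_dist_prod:
  assumes "finite I" "\<And>i. i \<in> I \<Longrightarrow> A i \<subseteq> Y"
    and "\<And>i j. i \<in> I \<Longrightarrow> j \<in> I \<Longrightarrow> i \<noteq> j \<Longrightarrow> A i \<inter> A j = {}"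
    and "\<And>i. i \<in> I \<Longrightarrow> determined_by (A i) (f i)"
  shows "(\<Sum>\<tau>\<in>configs Y. prod_dist Y p \<tau> * (\<Prod>i\<in>I. f i \<tau>))
       = (\<Prod>i\<in>I. \<Sum>\<tau>\<in>configs Y. prod_dist Y p \<tau> * f i \<tau>)"
  using assms
proof (induction I rule: finite_induct)
  case empty
  then show ?case using sum_prod_dist[OF finite_Y p_sum] by simp
next
  case (insert i I)
  have "A j \<subseteq> Y - A i" if "j \<in> I" for j
    using insert.hyps insert.prems(1,2) that by fastforce
  then have rest: "determined_by (Y - A i) (\<lambda>\<tau>. \<Prod>j\<in>I. f j \<tau>)"
    using insert.prems(3) unfolding determined_by_def by (intro allI impI prod.cong) blast+
  have "(\<Sum>\<tau>\<in>configs Y. prod_dist Y p \<tau> * (\<Prod>j\<in>insert i I. f j \<tau>))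
      = (\<Sum>\<tau>\<in>configs Y. prod_dist Y p \<tau> * (f i \<tau> * (\<Prod>j\<in>I. f j \<tau>)))"
    using insert.hyps by simp
  also have "\<dots> = (\<Sum>\<tau>\<in>configs Y. prod_dist Y p \<tau> * f i \<tau>)
      * (\<Sum>\<tau>\<in>configs Y. prod_dist Y p \<tau> * (\<Prod>j\<in>I. f j \<tau>))"
    using insert.prems(1,3) rest by (intro expectation_prod_dist_mult) auto
  finally show ?case
    using insert.hyps insert.IH insert.prems by simp
qed
end

lemma abs_divide_diff_le:
  fixes a b F G :: real
  assumes "0 \<le> a" "0 < G"
  shows "\<bar>a / F - b / G\<bar> \<le> a * \<bar>1 / F - 1 / G\<bar> + \<bar>a - b\<bar> / G"
proof -
  have eq: "a / F - b / G = a * (1 / F - 1 / G) + (a - b) / G"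
    by (simp add: diff_divide_distrib right_diff_distrib)
  have "\<bar>a / F - b / G\<bar> \<le> \<bar>a * (1 / F - 1 / G)\<bar> + \<bar>(a - b) / G\<bar>"
    unfolding eq by (rule abs_triangle_ineq)
  then show ?thesis
    using assms by (simp add: abs_mult)
qed

lemma sum_abs_normalized_diff_le:
  fixes f g :: "'a \<Rightarrow> real"
  assumes X: "finite X" and f: "\<And>x. x \<in> X \<Longrightarrow> 0 \<le> f x" and g: "\<And>x. x \<in> X \<Longrightarrow> 0 \<le> g x"
    and G: "0 < sum g X"
  shows "(\<Sum>x\<in>X. \<bar>f x / sum f X - g x / sum g X\<bar>) \<le> 2 * (\<Sum>x\<in>X. \<bar>f x - g x\<bar>) / sum g X"
proof (cases "sum f X = 0")
  case True
  then have f0: "f x = 0" if "x \<in> X" for x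
    using sum_nonneg_eq_0_iff[OF X] f that by blast
  then have "(\<Sum>x\<in>X. \<bar>f x / sum f X - g x / sum g X\<bar>) = (\<Sum>x\<in>X. g x / sum g X)"
    using g G by (intro sum.cong) auto
  also have "\<dots> = 1"
    using G by (simp add: sum_divide_distrib[symmetric])
  finally have "(\<Sum>x\<in>X. \<bar>f x / sum f X - g x / sum g X\<bar>) = 1" .
  moreover have "(\<Sum>x\<in>X. \<bar>f x - g x\<bar>) = sum g X"
    using f0 g by (intro sum.cong) auto
  ultimately show ?thesis using G by simp
next
  case False
  then have F: "0 < sum f X" using sum_nonneg[of X f] f by fastforce
  have pointwise: "\<bar>f x / sum f X - g x / sum g X\<bar>
      \<le> f x * \<bar>1 / sum f X - 1 / sum g X\<bar> + \<bar>f x - g x\<bar> / sum g X" if "x \<in> X" for x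
    using abs_divide_diff_le[OF f[OF that] G] .
  have "1 / sum f X - 1 / sum g X = (sum g X - sum f X) / (sum f X * sum g X)"
    using F G by (simp add: field_simps)
  then have "sum f X * \<bar>1 / sum f X - 1 / sum g X\<bar> = \<bar>sum g X - sum f X\<bar> / sum g X"
    using F G by (simp add: abs_mult)
  also have "\<bar>sum g X - sum f X\<bar> \<le> (\<Sum>x\<in>X. \<bar>f x - g x\<bar>)"
    using sum_abs[of "\<lambda>x. g x - f x" X] by (simp add: sum_subtractf abs_minus_commute)
  finally have "sum f X * \<bar>1 / sum f X - 1 / sum g X\<bar> \<le> (\<Sum>x\<in>X. \<bar>f x - g x\<bar>) / sum g X"
    using G by (simp add: divide_right_mono)
  moreover have "(\<Sum>x\<in>X. \<bar>f x / sum f X - g x / sum g X\<bar>)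
      \<le> (\<Sum>x\<in>X. f x * \<bar>1 / sum f X - 1 / sum g X\<bar> + \<bar>f x - g x\<bar> / sum g X)"
    using pointwise by (rule sum_mono)
  moreover have "2 * (\<Sum>x\<in>X. \<bar>f x - g x\<bar>) / sum g X
      = (\<Sum>x\<in>X. \<bar>f x - g x\<bar>) / sum g X + (\<Sum>x\<in>X. \<bar>f x - g x\<bar>) / sum g X"
    by simp
  ultimately show ?thesis
    by (simp add: sum.distrib sum_distrib_right[symmetric] sum_divide_distrib[symmetric])
qed

lemma sum_abs_normalized_diff_bound:
  fixes f g :: "'a \<Rightarrow> real"
  assumes "finite X" "\<And>x. x \<in> X \<Longrightarrow> 0 \<le> f x" "\<And>x. x \<in> X \<Longrightarrow> 0 \<le> g x"
    and "(\<Sum>x\<in>X. \<bar>f x - g x\<bar>) \<le> D" and "0 < L" "L \<le> sum g X"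
  shows "(\<Sum>x\<in>X. \<bar>f x / sum f X - g x / sum g X\<bar>) \<le> 2 * D / L"
proof -
  have "(\<Sum>x\<in>X. \<bar>f x / sum f X - g x / sum g X\<bar>) \<le> 2 * (\<Sum>x\<in>X. \<bar>f x - g x\<bar>) / sum g X"
    using assms by (intro sum_abs_normalized_diff_le) auto
  also have "\<dots> \<le> 2 * D / L"
    using assms order_trans[OF sum_nonneg assms(4)] by (intro frac_le) auto
  finally show ?thesis .
qed

lemma normalize_scale:
  fixes f :: "'a \<Rightarrow> real"
  assumes "c \<noteq> 0"
  shows "(c * f x) / (\<Sum>y\<in>X. c * f y) = f x / sum f X"
  using assms by (simp add: sum_distrib_left[symmetric])

lemma abs_prod_diff_le_sum:
  fixes u v :: "'a \<Rightarrow> real"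
  assumes "finite I" "\<And>i. i \<in> I \<Longrightarrow> 0 \<le> u i \<and> u i \<le> 1" "\<And>i. i \<in> I \<Longrightarrow> 0 \<le> v i \<and> v i \<le> 1"
  shows "\<bar>(\<Prod>i\<in>I. u i) - (\<Prod>i\<in>I. v i)\<bar> \<le> (\<Sum>i\<in>I. \<bar>u i - v i\<bar>)"
  using assms
proof (induction I rule: finite_induct)
  case (insert i I)
  let ?P = "\<Prod>j\<in>I. u j" and ?Q = "\<Prod>j\<in>I. v j"
  have Q: "0 \<le> ?Q" "?Q \<le> 1" using insert.prems by (auto intro: prod_nonneg prod_le_1)
  have "u i * ?P - v i * ?Q = u i * (?P - ?Q) + (u i - v i) * ?Q" by (simp add: algebra_simps)
  then have "\<bar>u i * ?P - v i * ?Q\<bar> \<le> \<bar>u i\<bar> * \<bar>?P - ?Q\<bar> + \<bar>u i - v i\<bar> * \<bar>?Q\<bar>"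
    by (metis abs_mult abs_triangle_ineq)
  also have "\<dots> \<le> 1 * (\<Sum>j\<in>I. \<bar>u j - v j\<bar>) + \<bar>u i - v i\<bar> * 1"
    using insert Q by (intro add_mono mult_mono) auto
  finally show ?case using insert.hyps by simp
qed simp

lemma abs_sum_mult_diff_le:
  fixes \<nu> \<pi> \<Phi> :: "'a \<Rightarrow> real"
  assumes "\<And>x. x \<in> X \<Longrightarrow> \<bar>\<Phi> x\<bar> \<le> K"
  shows "\<bar>(\<Sum>x\<in>X. \<nu> x * \<Phi> x) - (\<Sum>x\<in>X. \<pi> x * \<Phi> x)\<bar> \<le> (\<Sum>x\<in>X. \<bar>\<nu> x - \<pi> x\<bar>) * K"
proof -
  have "\<bar>(\<Sum>x\<in>X. \<nu> x * \<Phi> x) - (\<Sum>x\<in>X. \<pi> x * \<Phi> x)\<bar> \<le> (\<Sum>x\<in>X. \<bar>(\<nu> x - \<pi> x) * \<Phi> x\<bar>)"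
    by (simp add: sum_subtractf[symmetric] left_diff_distrib sum_abs)
  also have "\<dots> \<le> (\<Sum>x\<in>X. \<bar>\<nu> x - \<pi> x\<bar> * K)"
    using assms by (intro sum_mono) (simp add: abs_mult mult_left_mono)
  finally show ?thesis by (simp add: sum_distrib_right)
qed

lemma sum_abs_diff_triangle:
  fixes f g h :: "'a \<Rightarrow> real"
  shows "(\<Sum>x\<in>X. \<bar>f x - h x\<bar>) \<le> (\<Sum>x\<in>X. \<bar>f x - g x\<bar>) + (\<Sum>x\<in>X. \<bar>g x - h x\<bar>)"
  by (simp add: sum.distrib[symmetric] sum_mono abs_triangle_ineq4 order_trans[OF _ abs_triangle_ineq])

lemma power_card_le_prod:
  fixes f :: "'a \<Rightarrow> real"
  assumes "finite S" "card S \<le> r" "\<And>a. a \<in> S \<Longrightarrow> q \<le> f a" "0 \<le> q" "q \<le> 1"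
  shows "q ^ r \<le> (\<Prod>a\<in>S. f a)"
proof -
  have "q ^ r \<le> q ^ card S" using power_decreasing[OF assms(2,4,5)] .
  also have "\<dots> \<le> (\<Prod>a\<in>S. f a)" using prod_mono[of S "\<lambda>_. q" f] assms by auto
  finally show ?thesis .
qed

lemma prod_le_power_card:
  fixes f :: "'a \<Rightarrow> real"
  assumes "finite S" "card S \<le> r" "\<And>a. a \<in> S \<Longrightarrow> 0 \<le> f a \<and> f a \<le> M" "1 \<le> M"
  shows "(\<Prod>a\<in>S. f a) \<le> M ^ r"
proof -
  have "(\<Prod>a\<in>S. f a) \<le> M ^ card S" using prod_mono[of S f "\<lambda>_. M"] assms by auto
  also have "\<dots> \<le> M ^ r" using power_increasing[OF assms(2,4)] .
  finally show ?thesis .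
qed

lemma sum_weighted_bounds:
  fixes w \<Phi> :: "'a \<Rightarrow> real"
  assumes "\<And>x. x \<in> X \<Longrightarrow> a \<le> \<Phi> x \<and> \<Phi> x \<le> b" "\<And>x. x \<in> X \<Longrightarrow> 0 \<le> w x" "sum w X = 1"
  shows "a \<le> (\<Sum>x\<in>X. w x * \<Phi> x) \<and> (\<Sum>x\<in>X. w x * \<Phi> x) \<le> b"
proof
  have "(\<Sum>x\<in>X. w x * a) \<le> (\<Sum>x\<in>X. w x * \<Phi> x)"
    using assms by (intro sum_mono mult_left_mono) auto
  then show "a \<le> (\<Sum>x\<in>X. w x * \<Phi> x)" using assms(3) by (simp add: sum_distrib_right[symmetric])
  have "(\<Sum>x\<in>X. w x * \<Phi> x) \<le> (\<Sum>x\<in>X. w x * b)"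
    using assms by (intro sum_mono mult_left_mono) auto
  then show "(\<Sum>x\<in>X. w x * \<Phi> x) \<le> b" using assms(3) by (simp add: sum_distrib_right[symmetric])
qed

lemma normalized_bounds:
  fixes f :: "'c::finite \<Rightarrow> real"
  assumes "0 < m" and bounds: "\<And>c. m \<le> f c \<and> f c \<le> M"
  shows "m / (real (card (UNIV :: 'c set)) * M) \<le> f s / sum f UNIV \<and> f s / sum f UNIV \<le> 1"
proof
  have le_sum: "f s \<le> sum f UNIV"
    using bounds assms(1) by (intro member_le_sum) (auto intro: order_trans[OF less_imp_le])
  have pos: "0 < sum f UNIV" using le_sum bounds[of s] assms(1) by linarith
  have "sum f UNIV \<le> real (card (UNIV :: 'c set)) * M"
    using sum_bounded_above[of UNIV f M] bounds by auto
  then have "m / (real (card (UNIV :: 'c set)) * M) \<le> m / sum f UNIV"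
    using pos assms(1) by (intro divide_left_mono) auto
  also have "\<dots> \<le> f s / sum f UNIV"
    using bounds pos by (intro divide_right_mono) auto
  finally show "m / (real (card (UNIV :: 'c set)) * M) \<le> f s / sum f UNIV" .
  show "f s / sum f UNIV \<le> 1" using le_sum pos by simp
qed

section \<open>Weights and marginals of factor graphs\<close>

definition factor_weight :: "('v,'f,'c) fg \<Rightarrow> 'f set \<Rightarrow> ('v \<Rightarrow> 'c) \<Rightarrow> real" where
  "factor_weight G S \<rho> = (\<Prod>a\<in>S. psi G a (map \<rho> (nb G a)))"

lemma factor_weight_empty [simp]: "factor_weight G {} \<rho> = 1"
  by (simp add: factor_weight_def)

lemma del_facs_empty [simp]: "del_facs G {} = G"
  by (simp add: del_facs_def)

lemma del_facs_simps [simp]: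
  "vars (del_facs G D) = vars G" "nb (del_facs G D) = nb G"
  "psi (del_facs G D) = psi G" "facs (del_facs G D) = facs G - D"
  by (simp_all add: del_facs_def)

lemma weight_del_facs: "weight (del_facs G D) \<rho> = factor_weight G (facs G - D) \<rho>"
  by (simp add: weight_def factor_weight_def)

lemma factor_weight_Un:
  "finite S \<Longrightarrow> finite T \<Longrightarrow> S \<inter> T = {} \<Longrightarrow>
   factor_weight G (S \<union> T) \<rho> = factor_weight G S \<rho> * factor_weight G T \<rho>"
  by (simp add: factor_weight_def prod.union_disjoint)

lemma factor_weight_insert:
  "finite S \<Longrightarrow> a \<notin> S \<Longrightarrow>
   factor_weight G (insert a S) \<rho> = psi G a (map \<rho> (nb G a)) * factor_weight G S \<rho>"
  by (simp add: factor_weight_def)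

lemma factor_weight_cong:
  "(\<And>a v. a \<in> S \<Longrightarrow> v \<in> set (nb G a) \<Longrightarrow> \<rho> v = \<rho>' v) \<Longrightarrow> factor_weight G S \<rho> = factor_weight G S \<rho>'"
  unfolding factor_weight_def by (intro prod.cong refl arg_cong[where f = "psi G _"]) auto

lemma psi_cong:
  "(\<And>v. v \<in> set (nb G a) \<Longrightarrow> \<rho> v = \<rho>' v) \<Longrightarrow> psi G a (map \<rho> (nb G a)) = psi G a (map \<rho>' (nb G a))"
  by (metis map_eq_conv)

lemma fg_wf_del_facs: "fg_wf G \<Longrightarrow> fg_wf (del_facs G D)"
  by (auto simp: fg_wf_def)

lemma weight_nonneg: "fg_wf H \<Longrightarrow> 0 \<le> weight H \<rho>"
  unfolding fg_wf_def weight_def by (intro prod_nonneg) (auto intro: less_imp_le)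

lemma sum_weight_pos: "fg_wf H \<Longrightarrow> 0 < (\<Sum>\<rho>\<in>configs (vars H). weight H \<rho>)"
  for H :: "('v,'f,'c::finite) fg"
  unfolding fg_wf_def weight_def by (intro sum_pos prod_pos) (auto simp: configs_nonempty)

definition marg_weight :: "('v,'f,'c) fg \<Rightarrow> 'v set \<Rightarrow> ('v \<Rightarrow> 'c) \<Rightarrow> real" where
  "marg_weight H W \<tau>0 = (\<Sum>\<rho>\<in>configs (vars H). weight H \<rho> * (if restrict \<rho> W = \<tau>0 then 1 else 0))"

lemma marg_eq_ratio:
  "marg H W \<tau>0 = marg_weight H W \<tau>0 / (\<Sum>\<rho>\<in>configs (vars H). weight H \<rho>)"
  unfolding marg_def marg_weight_def gibbs_def by (simp add: sum_divide_distrib) (intro sum.cong, auto)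

lemma marg_eq_normalized:
  fixes H :: "('v,'f,'c::finite) fg"
  assumes "finite (vars H)" "finite W"
  shows "marg H W \<tau>0 = marg_weight H W \<tau>0 / (\<Sum>\<tau>\<in>configs W. marg_weight H W \<tau>)"
  using sum_fibres[of "configs (vars H)" "configs W" "\<lambda>\<rho>. restrict \<rho> W" "weight H" "\<lambda>_. 1"] assms
  unfolding marg_eq_ratio marg_weight_def by (simp add: if_distrib[of "(*) _"] cong: if_cong)

lemma marg_weight_nonneg: "fg_wf H \<Longrightarrow> 0 \<le> marg_weight H W \<tau>0"
  unfolding marg_weight_def by (intro sum_nonneg) (simp add: weight_nonneg)

definition marg1_weight :: "('v,'f,'c) fg \<Rightarrow> 'v \<Rightarrow> 'c \<Rightarrow> real" where
  "marg1_weight H z c = (\<Sum>\<rho>\<in>configs (vars H). weight H \<rho> * (if \<rho> z = c then 1 else 0))"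

lemma marg1_weight_nonneg: "fg_wf H \<Longrightarrow> 0 \<le> marg1_weight H z c"
  unfolding marg1_weight_def by (intro sum_nonneg) (simp add: weight_nonneg)

lemma marg1_eq_normalized:
  fixes H :: "('v,'f,'c::finite) fg"
  assumes "finite (vars H)"
  shows "marg1 H z c = marg1_weight H z c / (\<Sum>c'\<in>UNIV. marg1_weight H z c')"
  unfolding marg1_def marg1_weight_def gibbs_def sum_indicator_total[OF finite_configs[OF assms]]
  by (simp add: sum_divide_distrib) (intro sum.cong, auto)

lemma marg1_sum:
  fixes H :: "('v,'f,'c::finite) fg"
  assumes "fg_wf H"
  shows "(\<Sum>c\<in>UNIV. marg1 H z c) = 1"
proof -
  have fin: "finite (vars H)" using assms by (simp add: fg_wf_def)
  have "0 < (\<Sum>c'\<in>UNIV. marg1_weight H z c')"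
    using sum_weight_pos[OF assms] unfolding marg1_weight_def sum_indicator_total[OF finite_configs[OF fin]] .
  then show ?thesis
    unfolding marg1_eq_normalized[OF fin] by (simp add: sum_divide_distrib[symmetric])
qed

lemma marg1_bounds:
  fixes H :: "('v,'f,'c::finite) fg"
  assumes "fg_wf H"
  shows "0 \<le> marg1 H z c \<and> marg1 H z c \<le> 1"
proof
  have fin: "finite (vars H)" using assms by (simp add: fg_wf_def)
  show nonneg: "0 \<le> marg1 H z c" for c
    unfolding marg1_eq_normalized[OF fin]
    using marg1_weight_nonneg[OF assms] by (intro divide_nonneg_nonneg sum_nonneg) auto
  show "marg1 H z c \<le> 1"
    using member_le_sum[of c UNIV "marg1 H z"] nonneg marg1_sum[OF assms] by simp
qed

section \<open>Cavities\<close>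

locale cavity_graph =
  fixes G :: "('v,'f,'c::finite) fg" and U :: "'v set"
  assumes wf: "fg_wf G" and cavity: "cavity G U"
begin

definition "inner_facs = {a\<in>facs G. set (nb G a) \<subseteq> U}"
definition "outer_facs = {a\<in>facs G. set (nb G a) \<inter> U = {} \<and> set (nb G a) \<noteq> {}}"
definition "outer_vars = vars G - U"

abbreviation "B \<equiv> bdry G U"
abbreviation "Y \<equiv> dist2 G U"

definition "nu = marg (del_facs G B) Y"
definition "mu1 = marg1 (del_facs G B)"
definition "pi_Y = prod_dist Y mu1"
definition "tv = tv_prod (del_facs G B) Y"

definition "Z_out = (\<Sum>\<tau>\<in>configs outer_vars. factor_weight G outer_facs \<tau>)"

lemma finite_vars: "finite (vars G)"
  and finite_facs: "finite (facs G)"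
  and nb_subset_vars: "a \<in> facs G \<Longrightarrow> set (nb G a) \<subseteq> vars G"
  and psi_pos: "a \<in> facs G \<Longrightarrow> length \<tau> = length (nb G a) \<Longrightarrow> 0 < psi G a \<tau>"
  using wf unfolding fg_wf_def by auto

lemma U_subset_vars: "U \<subseteq> vars G"
  using cavity unfolding cavity_def by blast

lemma finite_U: "finite U"
  using U_subset_vars finite_vars finite_subset by auto

lemma finite_outer_vars: "finite outer_vars"
  using finite_vars by (simp add: outer_vars_def)

lemma Y_subset_outer_vars: "Y \<subseteq> outer_vars"
  by (auto simp: dist2_def outer_vars_def)

lemma finite_Y: "finite Y"
  using Y_subset_outer_vars finite_outer_vars finite_subset by auto

lemma Y_disjoint_U: "Y \<inter> U = {}"
  by (auto simp: dist2_def)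

lemma bdry_subset_facs: "B \<subseteq> facs G"
  by (auto simp: bdry_def)

lemma facs_partition:
  "facs G = inner_facs \<union> outer_facs \<union> B" "inner_facs \<inter> outer_facs = {}"
  "inner_facs \<inter> B = {}" "outer_facs \<inter> B = {}"
  unfolding inner_facs_def outer_facs_def bdry_def by (auto simp: disjoint_iff subset_iff)

lemma finite_inner_facs: "finite inner_facs" and finite_outer_facs: "finite outer_facs"
  and finite_bdry: "finite B"
  using finite_facs by (auto simp: inner_facs_def outer_facs_def bdry_def)

lemma bdry_nb_subset_Y: "a \<in> B \<Longrightarrow> set (nb G a) - U \<subseteq> Y"
  using nb_subset_vars by (auto simp: bdry_def dist2_def)

lemma bdry_nb_inter_U: assumes "a \<in> B" shows "set (nb G a) \<inter> U = {xto G a U}"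
proof -
  obtain x where x: "x \<in> set (nb G a) \<inter> U"
    using assms unfolding bdry_def by blast
  have "card (set (nb G a) \<inter> U) \<le> 1"
    using cavity assms unfolding cavity_def bdry_def by blast
  then have unique: "y = x" if "y \<in> set (nb G a) \<inter> U" for y
    using x that card_le_Suc0_iff_eq[of "set (nb G a) \<inter> U"] by auto
  then have "xto G a U = x"
    unfolding xto_def using x by blast
  then show ?thesis using x unique by blast
qed

lemma xto_in_U: "a \<in> B \<Longrightarrow> xto G a U \<in> U"
  using bdry_nb_inter_U by blast

lemma bdry_nb_disjoint:
  "a \<in> B \<Longrightarrow> b \<in> B \<Longrightarrow> a \<noteq> b \<Longrightarrow> (set (nb G a) - U) \<inter> (set (nb G b) - U) = {}"
  using cavity unfolding cavity_def bdry_def by blast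

lemma factor_weight_pos: "S \<subseteq> facs G \<Longrightarrow> 0 < factor_weight G S \<rho>"
  unfolding factor_weight_def by (intro prod_pos psi_pos) auto

lemma factor_weight_nonneg: "S \<subseteq> facs G \<Longrightarrow> 0 \<le> factor_weight G S \<rho>"
  using factor_weight_pos less_imp_le by blast

lemma inner_facs_subset: "inner_facs \<subseteq> facs G"
  by (auto simp: inner_facs_def)

lemma Z_out_pos: "0 < Z_out"
  unfolding Z_out_def using finite_outer_vars
  by (intro sum_pos factor_weight_pos) (auto simp: configs_nonempty outer_facs_def)

text \<open>Inner factors see only \<open>U\<close>, outer factors only the outside; boundary factors see both.\<close>

lemma sum_weight_del_facs_split:
  assumes "D \<inter> outer_facs = {}"
  shows "(\<Sum>\<rho>\<in>configs (vars G). weight (del_facs G D) \<rho> * \<chi> \<rho>) =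
    (\<Sum>\<sigma>\<in>configs U. \<Sum>\<tau>\<in>configs outer_vars. factor_weight G (inner_facs - D) \<sigma> *
       factor_weight G outer_facs \<tau> * factor_weight G (B - D) (override_on \<tau> \<sigma> U) *
       \<chi> (override_on \<tau> \<sigma> U))"
proof -
  have w: "weight (del_facs G D) \<rho>
      = factor_weight G (inner_facs - D) \<rho> * factor_weight G outer_facs \<rho> * factor_weight G (B - D) \<rho>"
    for \<rho>
  proof -
    have "facs G - D = (inner_facs - D) \<union> outer_facs \<union> (B - D)"
      using facs_partition assms by auto
    then have "weight (del_facs G D) \<rho>
        = factor_weight G ((inner_facs - D) \<union> outer_facs) \<rho> * factor_weight G (B - D) \<rho>"
      unfolding weight_del_facs using finite_inner_facs finite_outer_facs finite_bdry facs_partition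
      by (simp add: factor_weight_Un) (intro factor_weight_Un, auto)
    moreover have "factor_weight G ((inner_facs - D) \<union> outer_facs) \<rho>
        = factor_weight G (inner_facs - D) \<rho> * factor_weight G outer_facs \<rho>"
      using finite_inner_facs finite_outer_facs facs_partition by (intro factor_weight_Un) auto
    ultimately show ?thesis by simp
  qed
  have "factor_weight G (inner_facs - D) (override_on \<tau> \<sigma> U) = factor_weight G (inner_facs - D) \<sigma>"
    "factor_weight G outer_facs (override_on \<tau> \<sigma> U) = factor_weight G outer_facs \<tau>" for \<sigma> \<tau>
    by (auto intro!: factor_weight_cong simp: inner_facs_def outer_facs_def override_on_def)
  moreover have "vars G = U \<union> outer_vars" "U \<inter> outer_vars = {}"
    using U_subset_vars by (auto simp: outer_vars_def)
  ultimately show ?thesis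
    using finite_U finite_outer_vars by (simp add: sum_configs_Un w)
qed

lemma nu_eq:
  "nu \<tau>0 = (\<Sum>\<tau>\<in>configs outer_vars. factor_weight G outer_facs \<tau> * (if restrict \<tau> Y = \<tau>0 then 1 else 0))
            / Z_out"
proof -
  have disj: "B \<inter> outer_facs = {}" and inner: "inner_facs - B = inner_facs"
    using facs_partition by auto
  have restrict_Y: "restrict (override_on \<tau> \<sigma> U) Y = restrict \<tau> Y" for \<tau> \<sigma> :: "'v \<Rightarrow> 'c"
    using Y_disjoint_U by (auto simp: restrict_def fun_eq_iff override_on_def)
  have num: "marg_weight (del_facs G B) Y \<tau>0 = (\<Sum>\<sigma>\<in>configs U. factor_weight G inner_facs \<sigma>)
      * (\<Sum>\<tau>\<in>configs outer_vars. factor_weight G outer_facs \<tau> * (if restrict \<tau> Y = \<tau>0 then 1 else 0))"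
    unfolding marg_weight_def del_facs_simps sum_weight_del_facs_split[OF disj] inner restrict_Y
    by (simp add: sum_product mult_ac)
  have den: "(\<Sum>\<rho>\<in>configs (vars G). weight (del_facs G B) \<rho>)
      = (\<Sum>\<sigma>\<in>configs U. factor_weight G inner_facs \<sigma>) * Z_out"
    using sum_weight_del_facs_split[OF disj, of "\<lambda>_. 1"] unfolding inner Z_out_def
    by (simp add: sum_product mult_ac)
  have "0 < (\<Sum>\<sigma>\<in>configs U. factor_weight G inner_facs \<sigma>)"
    using finite_U by (intro sum_pos factor_weight_pos) (auto simp: configs_nonempty inner_facs_def)
  then show ?thesis unfolding nu_def marg_eq_ratio num den del_facs_simps by simp
qed

lemma expectation_nu:
  assumes "determined_by Y \<Phi>"
  shows "(\<Sum>\<tau>\<in>configs outer_vars. factor_weight G outer_facs \<tau> * \<Phi> \<tau>)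
       = Z_out * (\<Sum>\<tau>\<in>configs Y. nu \<tau> * \<Phi> \<tau>)"
proof -
  have "(\<Sum>\<tau>\<in>configs Y. nu \<tau> * \<Phi> \<tau>) = (\<Sum>\<tau>\<in>configs Y.
      (\<Sum>\<rho>\<in>configs outer_vars. if restrict \<rho> Y = \<tau> then factor_weight G outer_facs \<rho> / Z_out else 0) * \<Phi> \<tau>)"
    unfolding nu_eq sum_divide_distrib by (intro sum.cong refl arg_cong2[where f = "(*)"]) auto
  also have "\<dots> = (\<Sum>\<rho>\<in>configs outer_vars. factor_weight G outer_facs \<rho> / Z_out * \<Phi> (restrict \<rho> Y))"
    using finite_Y finite_outer_vars by (intro sum_fibres) auto
  also have "\<dots> = (\<Sum>\<rho>\<in>configs outer_vars. factor_weight G outer_facs \<rho> * \<Phi> \<rho>) / Z_out"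
    using determined_by_restrict[OF assms] by (simp add: sum_divide_distrib)
  finally show ?thesis using Z_out_pos by simp
qed

lemma sum_nu: "(\<Sum>\<tau>\<in>configs Y. nu \<tau>) = 1"
  using expectation_nu[of "\<lambda>_. 1"] Z_out_pos unfolding Z_out_def by simp

lemma mu1_sum: "(\<Sum>c\<in>UNIV. mu1 y c) = 1"
  unfolding mu1_def using marg1_sum[OF fg_wf_del_facs[OF wf]] .

lemma mu1_bounds: "0 \<le> mu1 y c \<and> mu1 y c \<le> 1"
  unfolding mu1_def using marg1_bounds[OF fg_wf_del_facs[OF wf]] .

lemma pi_Y_nonneg: "0 \<le> pi_Y \<tau>"
  unfolding pi_Y_def prod_dist_def using mu1_bounds by (intro prod_nonneg) auto

lemma sum_pi_Y: "(\<Sum>\<tau>\<in>configs Y. pi_Y \<tau>) = 1"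
  unfolding pi_Y_def using finite_Y mu1_sum by (intro sum_prod_dist)

lemma expectation_pi_Y_indicator:
  assumes "y \<in> Y"
  shows "(\<Sum>\<tau>\<in>configs Y. pi_Y \<tau> * (if \<tau> y = c then 1 else 0)) = mu1 y c"
proof -
  have "(\<Sum>\<tau>\<in>configs Y. pi_Y \<tau> * (if \<tau> y = c then 1 else 0))
      = (\<Sum>\<tau>\<in>configs {y}. prod_dist {y} mu1 \<tau> * (if \<tau> y = c then 1 else 0))"
    unfolding pi_Y_def using assms finite_Y mu1_sum
    by (intro expectation_prod_dist_marginal) (auto simp: determined_by_def)
  then show ?thesis
    by (simp add: sum_configs_singleton_indicator prod_dist_def const_config_def)
qed

lemma sum_abs_nu_pi_Y: "(\<Sum>\<tau>\<in>configs Y. \<bar>nu \<tau> - pi_Y \<tau>\<bar>) = 2 * tv"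
  unfolding tv_def tv_prod_def nu_def pi_Y_def prod_dist_def mu1_def by simp

lemma tv_nonneg: "0 \<le> tv"
  using sum_abs_nu_pi_Y sum_nonneg[of "configs Y" "\<lambda>\<tau>. \<bar>nu \<tau> - pi_Y \<tau>\<bar>"] by simp

lemma expectation_nu_pi_Y_diff:
  assumes "\<And>\<tau>. \<bar>\<Phi> \<tau>\<bar> \<le> K"
  shows "\<bar>(\<Sum>\<tau>\<in>configs Y. nu \<tau> * \<Phi> \<tau>) - (\<Sum>\<tau>\<in>configs Y. pi_Y \<tau> * \<Phi> \<tau>)\<bar> \<le> 2 * tv * K"
  using abs_sum_mult_diff_le[of "configs Y" \<Phi> K nu pi_Y] assms sum_abs_nu_pi_Y by simp

lemma determined_by_bdry_weight:
  assumes "S \<subseteq> B" "\<And>b. b \<in> S \<Longrightarrow> (set (nb G b) - U) \<inter> A = {}"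
  shows "determined_by (Y - A) (\<lambda>\<tau>. factor_weight G S (override_on \<tau> \<sigma> U))"
  unfolding determined_by_def
proof (intro allI impI factor_weight_cong)
  fix \<rho> \<rho>' :: "'v \<Rightarrow> 'c" and b v
  assume eq: "\<forall>y\<in>Y - A. \<rho> y = \<rho>' y" and b: "b \<in> S" and v: "v \<in> set (nb G b)"
  show "override_on \<rho> \<sigma> U v = override_on \<rho>' \<sigma> U v"
  proof (cases "v \<in> U")
    case False
    then have "v \<in> Y - A" using bdry_nb_subset_Y assms b v by blast
    then show ?thesis using eq False by simp
  qed simp
qed

text \<open>Everything outside \<open>U\<close> that no boundary factor sees is integrated out into \<open>nu\<close>.\<close>

lemma sum_weight_del_facs_eq:
  assumes "D \<inter> outer_facs = {}" "determined_by Y \<chi>2"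
  shows "(\<Sum>\<rho>\<in>configs (vars G). weight (del_facs G D) \<rho> * (\<chi>1 (restrict \<rho> U) * \<chi>2 \<rho>)) =
    Z_out * (\<Sum>\<sigma>\<in>configs U. factor_weight G (inner_facs - D) \<sigma> * \<chi>1 \<sigma> *
      (\<Sum>\<tau>\<in>configs Y. nu \<tau> * (factor_weight G (B - D) (override_on \<tau> \<sigma> U) * \<chi>2 \<tau>)))"
proof -
  have restrict_U: "restrict (override_on \<tau> \<sigma> U) U = \<sigma>" if "\<sigma> \<in> configs U" for \<sigma> \<tau>
    using that by (auto simp: configs_iff fun_eq_iff)
  have \<chi>2: "\<chi>2 (override_on \<tau> \<sigma> U) = \<chi>2 \<tau>" for \<sigma> \<tau>
    using Y_disjoint_U by (intro determined_byD[OF assms(2)]) (auto simp: override_on_def)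
  have "determined_by Y (\<lambda>\<tau>. factor_weight G (B - D) (override_on \<tau> \<sigma> U) * \<chi>2 \<tau>)" for \<sigma>
    using determined_by_bdry_weight[of "B - D" "{}"] assms(2) by (intro determined_by_mult) auto
  note nu = expectation_nu[OF this]
  have "(\<Sum>\<rho>\<in>configs (vars G). weight (del_facs G D) \<rho> * (\<chi>1 (restrict \<rho> U) * \<chi>2 \<rho>))
     = (\<Sum>\<sigma>\<in>configs U. factor_weight G (inner_facs - D) \<sigma> * \<chi>1 \<sigma> * (\<Sum>\<tau>\<in>configs outer_vars.
         factor_weight G outer_facs \<tau> * (factor_weight G (B - D) (override_on \<tau> \<sigma> U) * \<chi>2 \<tau>)))"
    unfolding sum_weight_del_facs_split[OF assms(1)]
    by (intro sum.cong refl) (simp add: restrict_U \<chi>2 sum_distrib_left mult_ac)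
  also have "\<dots> = (\<Sum>\<sigma>\<in>configs U. factor_weight G (inner_facs - D) \<sigma> * \<chi>1 \<sigma> * (Z_out *
      (\<Sum>\<tau>\<in>configs Y. nu \<tau> * (factor_weight G (B - D) (override_on \<tau> \<sigma> U) * \<chi>2 \<tau>))))"
    by (simp only: nu)
  finally show ?thesis by (simp add: sum_distrib_left mult_ac)
qed

text \<open>\<open>pi_msg_norm a\<close> is the message from a boundary factor \<open>a\<close> to \<open>x_{a\<rightarrow>U}\<close> computed as if the
  neighbours of \<open>a\<close> outside \<open>U\<close> were independent with laws \<open>mu1\<close>.\<close>

definition "psi_glued a \<sigma> \<tau> = psi G a (map (override_on \<tau> \<sigma> U) (nb G a))"
definition "psi_pi a \<sigma> = (\<Sum>\<tau>\<in>configs Y. pi_Y \<tau> * psi_glued a \<sigma> \<tau>)"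
definition "pi_msg a c = psi_pi a (const_config U c)"
definition "pi_msg_norm a c = pi_msg a c / (\<Sum>c'\<in>UNIV. pi_msg a c')"

lemma factor_weight_override_on: "factor_weight G S (override_on \<tau> \<sigma> U) = (\<Prod>a\<in>S. psi_glued a \<sigma> \<tau>)"
  unfolding factor_weight_def psi_glued_def ..

lemma determined_by_psi_glued: "determined_by (set (nb G a) - U) (psi_glued a \<sigma>)"
  unfolding determined_by_def psi_glued_def by (intro allI impI psi_cong) (simp add: override_on_def)

lemma psi_glued_xto:
  assumes "a \<in> B" "\<sigma> (xto G a U) = \<sigma>' (xto G a U)"
  shows "psi_glued a \<sigma> \<tau> = psi_glued a \<sigma>' \<tau>"
  unfolding psi_glued_def
proof (rule psi_cong)
  fix v assume "v \<in> set (nb G a)"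
  then have "v \<in> U \<Longrightarrow> v = xto G a U"
    using bdry_nb_inter_U[OF assms(1)] by blast
  then show "override_on \<tau> \<sigma> U v = override_on \<tau> \<sigma>' U v"
    using assms(2) by (cases "v \<in> U") auto
qed

lemma psi_pi_eq_pi_msg: "a \<in> B \<Longrightarrow> psi_pi a \<sigma> = pi_msg a (\<sigma> (xto G a U))"
  unfolding pi_msg_def psi_pi_def
  by (intro sum.cong refl arg_cong2[where f = "(*)"] psi_glued_xto) (auto simp: const_config_def xto_in_U)

lemma expectation_pi_Y_bdry_weight:
  assumes "S \<subseteq> B"
  shows "(\<Sum>\<tau>\<in>configs Y. pi_Y \<tau> * factor_weight G S (override_on \<tau> \<sigma> U)) = (\<Prod>a\<in>S. psi_pi a \<sigma>)"
  unfolding factor_weight_override_on psi_pi_def pi_Y_def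
proof (rule expectation_prod_dist_prod[OF finite_Y mu1_sum, where A = "\<lambda>a. set (nb G a) - U"])
  show "finite S" using assms finite_bdry finite_subset by auto
  show "set (nb G a) - U \<subseteq> Y" if "a \<in> S" for a
    using that assms bdry_nb_subset_Y by blast
  show "(set (nb G a) - U) \<inter> (set (nb G b) - U) = {}" if "a \<in> S" "b \<in> S" "a \<noteq> b" for a b
    using that assms bdry_nb_disjoint by blast
qed (rule determined_by_psi_glued)

lemma expectation_pi_Y_bdry_split:
  assumes "a \<in> B" "S \<subseteq> B - {a}"
  shows "(\<Sum>\<tau>\<in>configs Y. pi_Y \<tau> * (psi_glued a \<sigma> \<tau> * factor_weight G S (override_on \<tau> \<sigma> U)))
       = psi_pi a \<sigma> * (\<Sum>\<tau>\<in>configs Y. pi_Y \<tau> * factor_weight G S (override_on \<tau> \<sigma> U))"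
  unfolding psi_pi_def pi_Y_def
proof (rule expectation_prod_dist_mult[OF finite_Y mu1_sum bdry_nb_subset_Y[OF assms(1)]
      determined_by_psi_glued determined_by_bdry_weight])
  show "(set (nb G b) - U) \<inter> (set (nb G a) - U) = {}" if "b \<in> S" for b
    using that assms bdry_nb_disjoint by blast
qed (use assms in auto)

end

section \<open>Marginals and messages around a cavity\<close>

locale bounded_cavity = cavity_graph G U for G :: "('v,'f,'c::finite) fg" and U +
  fixes m M :: real and r :: nat
  assumes m_pos: "0 < m" and m_le_1: "m \<le> 1" and M_ge_1: "1 \<le> M"
    and psi_bounds: "\<And>a \<rho>. a \<in> facs G \<Longrightarrow> set (nb G a) \<inter> U \<noteq> {} \<Longrightarrow>
          m \<le> psi G a (map \<rho> (nb G a)) \<and> psi G a (map \<rho> (nb G a)) \<le> M"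
    and card_bdry: "card B \<le> r"
begin

lemma psi_glued_bounds: "a \<in> B \<Longrightarrow> m \<le> psi_glued a \<sigma> \<tau> \<and> psi_glued a \<sigma> \<tau> \<le> M"
  unfolding psi_glued_def using psi_bounds bdry_subset_facs by (auto simp: bdry_def)

lemma psi_glued_nonneg: "a \<in> B \<Longrightarrow> 0 \<le> psi_glued a \<sigma> \<tau>"
  using psi_glued_bounds m_pos by (meson less_imp_le order_trans)

lemma psi_pi_bounds: "a \<in> B \<Longrightarrow> m \<le> psi_pi a \<sigma> \<and> psi_pi a \<sigma> \<le> M"
  unfolding psi_pi_def using psi_glued_bounds pi_Y_nonneg sum_pi_Y
  by (intro sum_weighted_bounds) auto

lemma pi_msg_bounds: "a \<in> B \<Longrightarrow> m \<le> pi_msg a c \<and> pi_msg a c \<le> M"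
  unfolding pi_msg_def using psi_pi_bounds .

definition "q = m / (real (card (UNIV :: 'c set)) * M)"

lemma q_pos: "0 < q"
  unfolding q_def using m_pos M_ge_1 by (simp add: card_gt_0_iff)

lemma q_le_1: "q \<le> 1"
proof -
  have "1 \<le> real (card (UNIV :: 'c set))" by (simp add: Suc_le_eq card_gt_0_iff)
  then have "m \<le> real (card (UNIV :: 'c set)) * M"
    using m_le_1 M_ge_1 by (metis mult_mono' mult_1_left order_trans zero_le_one)
  then show ?thesis unfolding q_def using m_pos by simp
qed

lemma pi_msg_norm_bounds: "a \<in> B \<Longrightarrow> q \<le> pi_msg_norm a c \<and> pi_msg_norm a c \<le> 1"
  unfolding pi_msg_norm_def q_def using m_pos pi_msg_bounds by (intro normalized_bounds) auto

lemma bdry_weight_bounds: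
  assumes "S \<subseteq> B"
  shows "m ^ r \<le> factor_weight G S (override_on \<tau> \<sigma> U)
    \<and> factor_weight G S (override_on \<tau> \<sigma> U) \<le> M ^ r"
proof -
  have "finite S" "card S \<le> r"
    using assms finite_bdry card_bdry card_mono[OF finite_bdry assms] finite_subset by auto
  then show ?thesis
    unfolding factor_weight_override_on using assms psi_glued_bounds psi_glued_nonneg m_pos m_le_1 M_ge_1
    by (intro conjI power_card_le_prod prod_le_power_card) auto
qed

lemma abs_bdry_weight_le:
  assumes "S \<subseteq> B" shows "\<bar>factor_weight G S (override_on \<tau> \<sigma> U)\<bar> \<le> M ^ r"
proof -
  have "0 \<le> m ^ r" using m_pos by simp
  then show ?thesis using bdry_weight_bounds[OF assms, of \<tau> \<sigma>] by (simp add: abs_le_iff)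
qed

lemma expectation_pi_Y_bdry_weight_ge:
  "S \<subseteq> B \<Longrightarrow> m ^ r \<le> (\<Sum>\<tau>\<in>configs Y. pi_Y \<tau> * factor_weight G S (override_on \<tau> \<sigma> U))"
  using sum_weighted_bounds[of "configs Y" "m ^ r" "\<lambda>\<tau>. factor_weight G S (override_on \<tau> \<sigma> U)" "M ^ r"]
    bdry_weight_bounds pi_Y_nonneg sum_pi_Y by auto

lemma sum_weight_del_facs_approx:
  assumes "D \<inter> outer_facs = {}" "determined_by Y \<chi>2"
    and "\<And>\<tau>. \<bar>\<chi>2 \<tau>\<bar> \<le> 1" "\<And>\<sigma>. 0 \<le> \<chi>1 \<sigma>"
  shows "\<bar>(\<Sum>\<rho>\<in>configs (vars G). weight (del_facs G D) \<rho> * (\<chi>1 (restrict \<rho> U) * \<chi>2 \<rho>))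
       - Z_out * (\<Sum>\<sigma>\<in>configs U. factor_weight G (inner_facs - D) \<sigma> * \<chi>1 \<sigma> *
          (\<Sum>\<tau>\<in>configs Y. pi_Y \<tau> * (factor_weight G (B - D) (override_on \<tau> \<sigma> U) * \<chi>2 \<tau>)))\<bar>
     \<le> Z_out * (\<Sum>\<sigma>\<in>configs U. factor_weight G (inner_facs - D) \<sigma> * \<chi>1 \<sigma>) * (2 * tv * M ^ r)"
proof -
  define w where "w \<sigma> = factor_weight G (inner_facs - D) \<sigma> * \<chi>1 \<sigma>" for \<sigma>
  define \<Phi> where "\<Phi> \<sigma> \<tau> = factor_weight G (B - D) (override_on \<tau> \<sigma> U) * \<chi>2 \<tau>" for \<sigma> \<tau>
  have w: "0 \<le> w \<sigma>" for \<sigma>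
    unfolding w_def using assms(4) factor_weight_nonneg[of "inner_facs - D"] inner_facs_subset
    by (intro mult_nonneg_nonneg) auto
  have \<Phi>: "\<bar>\<Phi> \<sigma> \<tau>\<bar> \<le> M ^ r" for \<sigma> \<tau>
    unfolding \<Phi>_def abs_mult
    using mult_mono[OF abs_bdry_weight_le[of "B - D" \<tau> \<sigma>] assms(3)[of \<tau>]] M_ge_1 by simp
  have "\<bar>Z_out * (\<Sum>\<sigma>\<in>configs U. w \<sigma> * (\<Sum>\<tau>\<in>configs Y. nu \<tau> * \<Phi> \<sigma> \<tau>))
        - Z_out * (\<Sum>\<sigma>\<in>configs U. w \<sigma> * (\<Sum>\<tau>\<in>configs Y. pi_Y \<tau> * \<Phi> \<sigma> \<tau>))\<bar>
      = Z_out * \<bar>\<Sum>\<sigma>\<in>configs U. w \<sigma> *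
          ((\<Sum>\<tau>\<in>configs Y. nu \<tau> * \<Phi> \<sigma> \<tau>) - (\<Sum>\<tau>\<in>configs Y. pi_Y \<tau> * \<Phi> \<sigma> \<tau>))\<bar>"
    using Z_out_pos by (simp add: abs_mult right_diff_distrib[symmetric] sum_subtractf[symmetric])
  also have "\<dots> \<le> Z_out * (\<Sum>\<sigma>\<in>configs U. w \<sigma> * (2 * tv * M ^ r))"
    using Z_out_pos w expectation_nu_pi_Y_diff[OF \<Phi>]
    by (intro mult_left_mono order_trans[OF sum_abs] sum_mono) (auto simp: abs_mult mult_left_mono)
  also have "\<dots> = Z_out * (\<Sum>\<sigma>\<in>configs U. w \<sigma>) * (2 * tv * M ^ r)"
    by (simp add: sum_distrib_right mult.assoc)
  finally show ?thesis
    unfolding sum_weight_del_facs_eq[OF assms(1,2)] w_def \<Phi>_def by simp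
qed

definition "pi_marg_weight \<sigma> = factor_weight G inner_facs \<sigma> * (\<Prod>a\<in>B. pi_msg a (\<sigma> (xto G a U)))"

definition "pi_marg1_weight D x s = (\<Sum>\<sigma>\<in>configs U. factor_weight G (inner_facs - D) \<sigma> *
   (if \<sigma> x = s then 1 else 0) * (\<Sum>\<tau>\<in>configs Y. pi_Y \<tau> * factor_weight G (B - D) (override_on \<tau> \<sigma> U)))"

lemma pi_marg_weight_eq:
  "pi_marg_weight \<sigma> = factor_weight G inner_facs \<sigma> *
     (\<Sum>\<tau>\<in>configs Y. pi_Y \<tau> * factor_weight G B (override_on \<tau> \<sigma> U))"
  unfolding pi_marg_weight_def expectation_pi_Y_bdry_weight[OF order_refl]
  by (simp add: psi_pi_eq_pi_msg)

lemma pi_marg_weight_ge: "factor_weight G inner_facs \<sigma> * m ^ r \<le> pi_marg_weight \<sigma>"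
  unfolding pi_marg_weight_eq
  using expectation_pi_Y_bdry_weight_ge[OF order_refl] factor_weight_nonneg[OF inner_facs_subset]
  by (intro mult_left_mono) auto

lemma marg_weight_approx:
  assumes "\<sigma>0 \<in> configs U"
  shows "\<bar>marg_weight G U \<sigma>0 - Z_out * pi_marg_weight \<sigma>0\<bar>
       \<le> Z_out * factor_weight G inner_facs \<sigma>0 * (2 * tv * M ^ r)"
proof -
  let ?\<chi> = "\<lambda>\<sigma>. if \<sigma> = \<sigma>0 then 1 else 0 :: real"
  have "marg_weight G U \<sigma>0 = (\<Sum>\<rho>\<in>configs (vars G). weight (del_facs G {}) \<rho> * (?\<chi> (restrict \<rho> U) * 1))"
    unfolding marg_weight_def by simp
  moreover have "(\<Sum>\<sigma>\<in>configs U. factor_weight G (inner_facs - {}) \<sigma> * ?\<chi> \<sigma> *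
      (\<Sum>\<tau>\<in>configs Y. pi_Y \<tau> * (factor_weight G (B - {}) (override_on \<tau> \<sigma> U) * 1))) = pi_marg_weight \<sigma>0"
    using sum_mult_indicator[OF finite_configs[OF finite_U] assms, of "\<lambda>\<sigma>. factor_weight G inner_facs \<sigma> *
      (\<Sum>\<tau>\<in>configs Y. pi_Y \<tau> * factor_weight G B (override_on \<tau> \<sigma> U))"]
    by (simp add: pi_marg_weight_eq mult_ac)
  moreover have "(\<Sum>\<sigma>\<in>configs U. factor_weight G (inner_facs - {}) \<sigma> * ?\<chi> \<sigma>)
      = factor_weight G inner_facs \<sigma>0"
    using sum_mult_indicator[OF finite_configs[OF finite_U] assms] by simp
  ultimately show ?thesis
    using sum_weight_del_facs_approx[of "{}" "\<lambda>_. 1" ?\<chi>] by simp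
qed

theorem marg_pi_marg_weight_L1:
  "(\<Sum>\<sigma>\<in>configs U. \<bar>marg G U \<sigma> - pi_marg_weight \<sigma> / (\<Sum>\<sigma>'\<in>configs U. pi_marg_weight \<sigma>')\<bar>)
     \<le> 4 * tv * M ^ r / m ^ r"
proof -
  define W where "W = (\<Sum>\<sigma>\<in>configs U. factor_weight G inner_facs \<sigma>)"
  have W: "0 < W"
    unfolding W_def using finite_U factor_weight_pos[OF inner_facs_subset]
    by (intro sum_pos) (auto simp: configs_nonempty)
  have gap: "(\<Sum>\<sigma>\<in>configs U. \<bar>marg_weight G U \<sigma> - Z_out * pi_marg_weight \<sigma>\<bar>) \<le> Z_out * W * (2 * tv * M ^ r)"
    using sum_mono[of "configs U", OF marg_weight_approx] unfolding W_def
    by (simp add: sum_distrib_left sum_distrib_right)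
  have "Z_out * W * m ^ r = (\<Sum>\<sigma>\<in>configs U. Z_out * (factor_weight G inner_facs \<sigma> * m ^ r))"
    unfolding W_def by (simp add: sum_distrib_left sum_distrib_right mult.assoc)
  also have "\<dots> \<le> (\<Sum>\<sigma>\<in>configs U. Z_out * pi_marg_weight \<sigma>)"
    using pi_marg_weight_ge Z_out_pos by (intro sum_mono mult_left_mono) auto
  finally have low: "Z_out * W * m ^ r \<le> (\<Sum>\<sigma>\<in>configs U. Z_out * pi_marg_weight \<sigma>)" .
  have nonneg: "0 \<le> Z_out * pi_marg_weight \<sigma>" for \<sigma>
    using pi_marg_weight_ge[of \<sigma>] factor_weight_nonneg[OF inner_facs_subset, of \<sigma>] m_pos Z_out_pos
    by (meson less_imp_le mult_nonneg_nonneg order_trans zero_le_power)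
  have "(\<Sum>\<sigma>\<in>configs U. \<bar>marg G U \<sigma> - pi_marg_weight \<sigma> / (\<Sum>\<sigma>'\<in>configs U. pi_marg_weight \<sigma>')\<bar>)
      \<le> 2 * (Z_out * W * (2 * tv * M ^ r)) / (Z_out * W * m ^ r)"
    unfolding marg_eq_normalized[OF finite_vars finite_U]
      normalize_scale[of Z_out pi_marg_weight, symmetric, OF Z_out_pos[THEN less_imp_neq, symmetric]]
    using gap low nonneg marg_weight_nonneg[OF wf] Z_out_pos W m_pos finite_U
    by (intro sum_abs_normalized_diff_bound) auto
  also have "\<dots> = 4 * tv * M ^ r / m ^ r"
    using Z_out_pos W by (simp add: field_simps)
  finally show ?thesis .
qed

lemma pi_marg1_weight_nonneg: "0 \<le> pi_marg1_weight D x s"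
  unfolding pi_marg1_weight_def
  using factor_weight_nonneg[OF order_trans[OF Diff_subset inner_facs_subset]]
    factor_weight_nonneg[OF order_trans[OF Diff_subset bdry_subset_facs]] pi_Y_nonneg
  by (intro sum_nonneg mult_nonneg_nonneg) auto

lemma sum_pi_marg1_weight_ge:
  "(\<Sum>\<sigma>\<in>configs U. factor_weight G (inner_facs - D) \<sigma>) * m ^ r \<le> (\<Sum>s\<in>UNIV. pi_marg1_weight D x s)"
proof -
  have "(\<Sum>s\<in>UNIV. pi_marg1_weight D x s) = (\<Sum>\<sigma>\<in>configs U. factor_weight G (inner_facs - D) \<sigma> *
      (\<Sum>\<tau>\<in>configs Y. pi_Y \<tau> * factor_weight G (B - D) (override_on \<tau> \<sigma> U)))"
    unfolding pi_marg1_weight_def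
    using sum_indicator_total[OF finite_configs[OF finite_U], of "\<lambda>\<sigma>. factor_weight G (inner_facs - D) \<sigma> *
      (\<Sum>\<tau>\<in>configs Y. pi_Y \<tau> * factor_weight G (B - D) (override_on \<tau> \<sigma> U))" x]
    by (simp add: mult_ac)
  also have "\<dots> \<ge> (\<Sum>\<sigma>\<in>configs U. factor_weight G (inner_facs - D) \<sigma> * m ^ r)"
    using expectation_pi_Y_bdry_weight_ge[of "B - D"] factor_weight_nonneg[of "inner_facs - D"]
      inner_facs_subset
    by (intro sum_mono mult_left_mono) auto
  finally show ?thesis by (simp add: sum_distrib_right)
qed

lemma marg1_weight_approx:
  assumes "x \<in> U" "D \<inter> outer_facs = {}"
  shows "(\<Sum>s\<in>UNIV. \<bar>marg1_weight (del_facs G D) x s - Z_out * pi_marg1_weight D x s\<bar>)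
       \<le> Z_out * (\<Sum>\<sigma>\<in>configs U. factor_weight G (inner_facs - D) \<sigma>) * (2 * tv * M ^ r)"
proof -
  let ?\<chi> = "\<lambda>s \<sigma>. if \<sigma> x = s then 1 else 0 :: real"
  have "\<bar>marg1_weight (del_facs G D) x s - Z_out * pi_marg1_weight D x s\<bar>
      \<le> Z_out * (\<Sum>\<sigma>\<in>configs U. factor_weight G (inner_facs - D) \<sigma> * ?\<chi> s \<sigma>) * (2 * tv * M ^ r)" for s
  proof -
    have "marg1_weight (del_facs G D) x s
        = (\<Sum>\<rho>\<in>configs (vars G). weight (del_facs G D) \<rho> * (?\<chi> s (restrict \<rho> U) * 1))"
      unfolding marg1_weight_def using assms(1) by simp
    then show ?thesis
      using sum_weight_del_facs_approx[OF assms(2), of "\<lambda>_. 1" "?\<chi> s"] unfolding pi_marg1_weight_def by simp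
  qed
  then have "(\<Sum>s\<in>UNIV. \<bar>marg1_weight (del_facs G D) x s - Z_out * pi_marg1_weight D x s\<bar>)
      \<le> (\<Sum>s\<in>UNIV. Z_out * (\<Sum>\<sigma>\<in>configs U. factor_weight G (inner_facs - D) \<sigma> * ?\<chi> s \<sigma>) * (2 * tv * M ^ r))"
    by (rule sum_mono)
  also have "\<dots> = Z_out * (\<Sum>\<sigma>\<in>configs U. factor_weight G (inner_facs - D) \<sigma>) * (2 * tv * M ^ r)"
    using sum_indicator_total[OF finite_configs[OF finite_U], of "factor_weight G (inner_facs - D)" x]
    by (simp add: sum_distrib_left[symmetric] sum_distrib_right[symmetric])
  finally show ?thesis .
qed

theorem marg1_del_facs_L1:
  assumes "x \<in> U" "D \<inter> outer_facs = {}"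
  shows "(\<Sum>s\<in>UNIV. \<bar>marg1 (del_facs G D) x s - pi_marg1_weight D x s / (\<Sum>s'\<in>UNIV. pi_marg1_weight D x s')\<bar>)
       \<le> 4 * tv * M ^ r / m ^ r"
proof -
  define W where "W = (\<Sum>\<sigma>\<in>configs U. factor_weight G (inner_facs - D) \<sigma>)"
  have W: "0 < W"
    unfolding W_def using finite_U factor_weight_pos[of "inner_facs - D"] inner_facs_subset
    by (intro sum_pos) (auto simp: configs_nonempty)
  have low: "Z_out * W * m ^ r \<le> (\<Sum>s\<in>UNIV. Z_out * pi_marg1_weight D x s)"
    using sum_pi_marg1_weight_ge[of D x] Z_out_pos unfolding W_def
    by (simp add: sum_distrib_left[symmetric] mult.assoc)
  have "(\<Sum>s\<in>UNIV. \<bar>marg1 (del_facs G D) x s - pi_marg1_weight D x s / (\<Sum>s'\<in>UNIV. pi_marg1_weight D x s')\<bar>)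
      \<le> 2 * (Z_out * W * (2 * tv * M ^ r)) / (Z_out * W * m ^ r)"
    unfolding marg1_eq_normalized[of "del_facs G D", unfolded del_facs_simps, OF finite_vars]
      normalize_scale[of Z_out "pi_marg1_weight D x", symmetric, OF Z_out_pos[THEN less_imp_neq, symmetric]]
    using marg1_weight_approx[OF assms] low marg1_weight_nonneg[OF fg_wf_del_facs[OF wf]]
      pi_marg1_weight_nonneg Z_out_pos W m_pos
    by (intro sum_abs_normalized_diff_bound) (auto simp: W_def)
  also have "\<dots> = 4 * tv * M ^ r / m ^ r"
    using Z_out_pos W by (simp add: field_simps)
  finally show ?thesis .
qed

lemma sum_inner_facs_weight_pos: "0 < (\<Sum>\<sigma>\<in>configs U. factor_weight G (inner_facs - D) \<sigma>)"
  using finite_U factor_weight_pos[OF order_trans[OF Diff_subset inner_facs_subset]]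
  by (intro sum_pos) (auto simp: configs_nonempty)

lemma sum_pi_marg1_weight_pos: "0 < (\<Sum>s\<in>UNIV. pi_marg1_weight D x s)"
  using sum_pi_marg1_weight_ge[of D x] sum_inner_facs_weight_pos[of D] m_pos
  by (meson less_le_trans mult_pos_pos zero_less_power)

lemma dvar_disjoint_outer_facs: "x \<in> U \<Longrightarrow> D \<subseteq> dvar G x \<Longrightarrow> D \<inter> outer_facs = {}"
  by (auto simp: dvar_def outer_facs_def)

text \<open>Removing all factors at \<open>x = x_{a\<rightarrow>U}\<close> except \<open>a\<close>, the inner and remaining boundary factors no
  longer see \<open>x\<close>, so only \<open>a\<close> depends on the spin at \<open>x\<close>.\<close>

lemma pi_marg1_weight_bdry:
  assumes "a \<in> B"
  defines "x \<equiv> xto G a U"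
  obtains C where "\<And>s. pi_marg1_weight (dvar G x - {a}) x s = C * pi_msg a s"
proof -
  define D where "D = dvar G x - {a}"
  define BB where "BB = B - dvar G x"
  have x: "x \<in> U" unfolding x_def using xto_in_U[OF assms(1)] .
  have "a \<in> dvar G x"
    using bdry_nb_inter_U[OF assms(1)] assms(1) bdry_subset_facs by (auto simp: dvar_def x_def)
  then have BD: "B - D = insert a BB" "a \<notin> BB" "BB \<subseteq> B - {a}"
    using assms(1) by (auto simp: D_def BB_def)
  define EB where "EB \<sigma> = (\<Sum>\<tau>\<in>configs Y. pi_Y \<tau> * factor_weight G BB (override_on \<tau> \<sigma> U))" for \<sigma>
  have E: "(\<Sum>\<tau>\<in>configs Y. pi_Y \<tau> * factor_weight G (B - D) (override_on \<tau> \<sigma> U)) = pi_msg a (\<sigma> x) * EB \<sigma>"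
    for \<sigma>
    using expectation_pi_Y_bdry_split[OF assms(1) BD(3)]
      factor_weight_insert[of BB a G, OF _ BD(2)] finite_bdry
    unfolding EB_def x_def psi_pi_eq_pi_msg[OF assms(1), symmetric] BD(1)
    by (simp add: BB_def psi_glued_def)
  define F where "F \<sigma> = factor_weight G (inner_facs - D) \<sigma> * EB \<sigma>" for \<sigma>
  have F_upd: "F (\<sigma>(x := t)) = F \<sigma>" for \<sigma> t
  proof -
    have "x \<notin> set (nb G b)" if "b \<in> inner_facs - D \<or> b \<in> BB" for b
      using that facs_partition(3) assms(1) bdry_subset_facs
      by (auto simp: D_def BB_def dvar_def inner_facs_def)
    then show ?thesis
      unfolding F_def EB_def
      by (intro arg_cong2[where f = "(*)"] sum.cong refl factor_weight_cong) (auto simp: override_on_def)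
  qed
  obtain c0 :: 'c where True by blast
  define C where "C = (\<Sum>\<sigma>\<in>configs U. F \<sigma> * (if \<sigma> x = c0 then 1 else 0))"
  have "pi_marg1_weight D x s = C * pi_msg a s" for s
  proof -
    have "pi_marg1_weight D x s = (\<Sum>\<sigma>\<in>configs U. F \<sigma> * (if \<sigma> x = s then 1 else 0)) * pi_msg a s"
      unfolding pi_marg1_weight_def E F_def sum_distrib_right
      by (intro sum.cong refl) auto
    then show ?thesis
      unfolding C_def using sum_indicator_update_invariant[OF finite_configs[OF finite_U] x F_upd] by simp
  qed
  then show ?thesis using that unfolding D_def by blast
qed

theorem msg_fv_L1:
  assumes "a \<in> B"
  shows "(\<Sum>s\<in>UNIV. \<bar>msg_fv G a (xto G a U) s - pi_msg_norm a s\<bar>) \<le> 4 * tv * M ^ r / m ^ r"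
proof -
  define x where "x = xto G a U"
  obtain C where C: "\<And>s. pi_marg1_weight (dvar G x - {a}) x s = C * pi_msg a s"
    using pi_marg1_weight_bdry[OF assms] unfolding x_def by blast
  have "C \<noteq> 0"
    using sum_pi_marg1_weight_pos[of "dvar G x - {a}" x] unfolding C by auto
  then have "pi_marg1_weight (dvar G x - {a}) x s / (\<Sum>s'\<in>UNIV. pi_marg1_weight (dvar G x - {a}) x s')
      = pi_msg_norm a s" for s
    unfolding C pi_msg_norm_def by (rule normalize_scale)
  moreover have "x \<in> U" unfolding x_def using xto_in_U[OF assms] .
  ultimately show ?thesis
    using marg1_del_facs_L1[of x "dvar G x - {a}"] dvar_disjoint_outer_facs[of x "dvar G x - {a}"]
    unfolding msg_fv_def x_def by auto
qed

lemma msg_fv_bounds: "0 \<le> msg_fv G a x s \<and> msg_fv G a x s \<le> 1"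
  unfolding msg_fv_def using marg1_bounds[OF fg_wf_del_facs[OF wf]] .

lemma msg_fv_diff_le: "a \<in> B \<Longrightarrow> \<bar>msg_fv G a (xto G a U) s - pi_msg_norm a s\<bar> \<le> 4 * tv * M ^ r / m ^ r"
  using member_le_sum[of s UNIV "\<lambda>s. \<bar>msg_fv G a (xto G a U) s - pi_msg_norm a s\<bar>"] msg_fv_L1
  by (meson UNIV_I abs_ge_zero finite order_trans)

lemma gibbs_induced: "gibbs (induced G U) \<sigma>
    = factor_weight G inner_facs \<sigma> / (\<Sum>\<tau>\<in>configs U. factor_weight G inner_facs \<tau>)"
  by (simp add: gibbs_def weight_def factor_weight_def induced_def inner_facs_def)

definition "pi_barmu_weight \<sigma> = gibbs (induced G U) \<sigma> * (\<Prod>a\<in>B. pi_msg_norm a (\<sigma> (xto G a U)))"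

lemma pi_barmu_weight_normalized:
  "pi_barmu_weight \<sigma> / (\<Sum>\<sigma>'\<in>configs U. pi_barmu_weight \<sigma>')
     = pi_marg_weight \<sigma> / (\<Sum>\<sigma>'\<in>configs U. pi_marg_weight \<sigma>')"
proof -
  define c where "c = 1 / ((\<Sum>\<tau>\<in>configs U. factor_weight G inner_facs \<tau>) * (\<Prod>a\<in>B. \<Sum>s\<in>UNIV. pi_msg a s))"
  have "0 < (\<Sum>s\<in>UNIV. pi_msg a s)" if "a \<in> B" for a
    using pi_msg_bounds[OF that] m_pos by (intro sum_pos) (auto intro: less_le_trans)
  then have "c \<noteq> 0"
    unfolding c_def using sum_inner_facs_weight_pos[of "{}"] by (simp add: prod_pos less_imp_neq[symmetric])
  moreover have "pi_barmu_weight \<sigma> = c * pi_marg_weight \<sigma>" for \<sigma>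
    unfolding pi_barmu_weight_def pi_marg_weight_def gibbs_induced c_def pi_msg_norm_def prod_dividef
    by simp
  ultimately show ?thesis by (simp add: normalize_scale)
qed

definition "barmu_weight \<sigma> = gibbs (induced G U) \<sigma> * (\<Prod>a\<in>B. msg_fv G a (xto G a U) (\<sigma> (xto G a U)))"

lemma gibbs_induced_nonneg: "0 \<le> gibbs (induced G U) \<sigma>"
  unfolding gibbs_induced using sum_inner_facs_weight_pos[of "{}"] factor_weight_nonneg[OF inner_facs_subset]
  by simp

lemma sum_gibbs_induced: "(\<Sum>\<sigma>\<in>configs U. gibbs (induced G U) \<sigma>) = 1"
  unfolding gibbs_induced sum_divide_distrib[symmetric] using sum_inner_facs_weight_pos[of "{}"] by simp

lemma pi_msg_norm_nonneg: "a \<in> B \<Longrightarrow> 0 \<le> pi_msg_norm a c \<and> pi_msg_norm a c \<le> 1"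
  using pi_msg_norm_bounds[of a c] q_pos by linarith

lemma barmu_weight_diff_le:
  "\<bar>barmu_weight \<sigma> - pi_barmu_weight \<sigma>\<bar> \<le> gibbs (induced G U) \<sigma> * (real r * (4 * tv * M ^ r / m ^ r))"
proof -
  let ?x = "\<lambda>a. xto G a U"
  have "\<bar>barmu_weight \<sigma> - pi_barmu_weight \<sigma>\<bar> = gibbs (induced G U) \<sigma> *
      \<bar>(\<Prod>a\<in>B. msg_fv G a (?x a) (\<sigma> (?x a))) - (\<Prod>a\<in>B. pi_msg_norm a (\<sigma> (?x a)))\<bar>"
    unfolding barmu_weight_def pi_barmu_weight_def using gibbs_induced_nonneg[of \<sigma>]
    by (simp add: right_diff_distrib[symmetric] abs_mult)
  also have "\<dots> \<le> gibbs (induced G U) \<sigma> *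
      (\<Sum>a\<in>B. \<bar>msg_fv G a (?x a) (\<sigma> (?x a)) - pi_msg_norm a (\<sigma> (?x a))\<bar>)"
    using gibbs_induced_nonneg msg_fv_bounds pi_msg_norm_nonneg finite_bdry
    by (intro mult_left_mono abs_prod_diff_le_sum) auto
  also have "\<dots> \<le> gibbs (induced G U) \<sigma> * (real (card B) * (4 * tv * M ^ r / m ^ r))"
    using gibbs_induced_nonneg msg_fv_diff_le by (intro mult_left_mono sum_bounded_above) auto
  also have "\<dots> \<le> gibbs (induced G U) \<sigma> * (real r * (4 * tv * M ^ r / m ^ r))"
    using gibbs_induced_nonneg card_bdry tv_nonneg m_pos M_ge_1
    by (intro mult_left_mono mult_right_mono) auto
  finally show ?thesis .
qed

lemma sum_pi_barmu_weight_ge: "q ^ r \<le> (\<Sum>\<sigma>\<in>configs U. pi_barmu_weight \<sigma>)"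
proof -
  have "q ^ r \<le> (\<Prod>a\<in>B. pi_msg_norm a (\<sigma> (xto G a U)))" for \<sigma>
    using finite_bdry card_bdry pi_msg_norm_bounds q_pos q_le_1 by (intro power_card_le_prod) auto
  then have "(\<Sum>\<sigma>\<in>configs U. gibbs (induced G U) \<sigma> * q ^ r) \<le> (\<Sum>\<sigma>\<in>configs U. pi_barmu_weight \<sigma>)"
    unfolding pi_barmu_weight_def using gibbs_induced_nonneg by (intro sum_mono mult_left_mono) auto
  then show ?thesis using sum_gibbs_induced by (simp add: sum_distrib_right[symmetric])
qed

theorem barmu_L1:
  "(\<Sum>\<sigma>\<in>configs U. \<bar>barmu G U \<sigma> - pi_marg_weight \<sigma> / (\<Sum>\<sigma>'\<in>configs U. pi_marg_weight \<sigma>')\<bar>)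
     \<le> 2 * (real r * (4 * tv * M ^ r / m ^ r)) / q ^ r"
proof -
  have "(\<Sum>\<sigma>\<in>configs U. \<bar>barmu_weight \<sigma> - pi_barmu_weight \<sigma>\<bar>)
      \<le> (\<Sum>\<sigma>\<in>configs U. gibbs (induced G U) \<sigma> * (real r * (4 * tv * M ^ r / m ^ r)))"
    using barmu_weight_diff_le by (rule sum_mono)
  also have "\<dots> = real r * (4 * tv * M ^ r / m ^ r)"
    using sum_gibbs_induced by (simp only: sum_distrib_right[symmetric] mult_1)
  finally have "(\<Sum>\<sigma>\<in>configs U. \<bar>barmu_weight \<sigma> - pi_barmu_weight \<sigma>\<bar>) \<le> real r * (4 * tv * M ^ r / m ^ r)" .
  moreover have "0 \<le> barmu_weight \<sigma>" "0 \<le> pi_barmu_weight \<sigma>" for \<sigma>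
    unfolding barmu_weight_def pi_barmu_weight_def
    using gibbs_induced_nonneg msg_fv_bounds pi_msg_norm_nonneg by (auto intro!: mult_nonneg_nonneg prod_nonneg)
  ultimately have "(\<Sum>\<sigma>\<in>configs U. \<bar>barmu_weight \<sigma> / sum barmu_weight (configs U)
      - pi_barmu_weight \<sigma> / sum pi_barmu_weight (configs U)\<bar>) \<le> 2 * (real r * (4 * tv * M ^ r / m ^ r)) / q ^ r"
    using sum_pi_barmu_weight_ge finite_U q_pos by (intro sum_abs_normalized_diff_bound) auto
  then show ?thesis
    unfolding pi_barmu_weight_normalized[symmetric]
    by (simp add: barmu_def barmu_weight_def[symmetric] Let_def)
qed

lemma expectation_pi_Y_bdry_weight_indicator:
  assumes "a \<in> B" "y \<in> set (nb G a) - U"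
  shows "(\<Sum>\<tau>\<in>configs Y. pi_Y \<tau> * (factor_weight G (B - {a}) (override_on \<tau> \<sigma> U) * (if \<tau> y = c then 1 else 0)))
       = mu1 y c * (\<Sum>\<tau>\<in>configs Y. pi_Y \<tau> * factor_weight G (B - {a}) (override_on \<tau> \<sigma> U))"
proof -
  have y: "y \<in> Y" using bdry_nb_subset_Y[OF assms(1)] assms(2) by blast
  have "determined_by (Y - {y}) (\<lambda>\<tau>. factor_weight G (B - {a}) (override_on \<tau> \<sigma> U))"
    using bdry_nb_disjoint[OF assms(1)] assms(2) by (intro determined_by_bdry_weight) auto
  then have "(\<Sum>\<tau>\<in>configs Y. pi_Y \<tau> * ((if \<tau> y = c then 1 else 0) * factor_weight G (B - {a}) (override_on \<tau> \<sigma> U)))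
      = (\<Sum>\<tau>\<in>configs Y. pi_Y \<tau> * (if \<tau> y = c then 1 else 0)) *
        (\<Sum>\<tau>\<in>configs Y. pi_Y \<tau> * factor_weight G (B - {a}) (override_on \<tau> \<sigma> U))"
    unfolding pi_Y_def using y
    by (intro expectation_prod_dist_mult[OF finite_Y mu1_sum]) (auto simp: determined_by_def)
  then show ?thesis
    using expectation_pi_Y_indicator[OF y] by (simp add: mult_ac)
qed

definition "pi_rest_weight a = (\<Sum>\<sigma>\<in>configs U. factor_weight G inner_facs \<sigma> *
   (\<Sum>\<tau>\<in>configs Y. pi_Y \<tau> * factor_weight G (B - {a}) (override_on \<tau> \<sigma> U)))"

lemma pi_rest_weight_ge: "(\<Sum>\<sigma>\<in>configs U. factor_weight G inner_facs \<sigma>) * m ^ r \<le> pi_rest_weight a"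
  unfolding pi_rest_weight_def sum_distrib_right
  using expectation_pi_Y_bdry_weight_ge[of "B - {a}"] factor_weight_nonneg[OF inner_facs_subset]
  by (intro sum_mono mult_left_mono) auto

lemma marg1_weight_outer_approx:
  assumes "a \<in> B" "y \<in> set (nb G a) - U"
  shows "\<bar>marg1_weight (del_facs G {a}) y c - Z_out * pi_rest_weight a * mu1 y c\<bar>
       \<le> Z_out * (\<Sum>\<sigma>\<in>configs U. factor_weight G inner_facs \<sigma>) * (2 * tv * M ^ r)"
proof -
  let ?\<chi> = "\<lambda>\<tau>. if \<tau> y = c then 1 else 0 :: real"
  have a: "{a} \<inter> outer_facs = {}" "inner_facs - {a} = inner_facs"
    using assms(1) facs_partition by auto
  have "y \<in> Y" using bdry_nb_subset_Y[OF assms(1)] assms(2) by blast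
  then have "determined_by Y ?\<chi>" by (auto simp: determined_by_def)
  moreover have "marg1_weight (del_facs G {a}) y c
      = (\<Sum>\<rho>\<in>configs (vars G). weight (del_facs G {a}) \<rho> * ((\<lambda>_. 1) (restrict \<rho> U) * ?\<chi> \<rho>))"
    unfolding marg1_weight_def by simp
  moreover have "\<bar>?\<chi> \<tau>\<bar> \<le> 1" for \<tau> by simp
  ultimately show ?thesis
    using sum_weight_del_facs_approx[OF a(1), of ?\<chi> "\<lambda>_. 1"]
    unfolding a(2) pi_rest_weight_def expectation_pi_Y_bdry_weight_indicator[OF assms]
    by (simp add: sum_distrib_left sum_distrib_right mult_ac)
qed

theorem msg_vf_L1:
  assumes "a \<in> B" "y \<in> set (nb G a) - U"
  shows "(\<Sum>c\<in>UNIV. \<bar>msg_vf G y a c - mu1 y c\<bar>) \<le> 4 * real (card (UNIV :: 'c set)) * tv * M ^ r / m ^ r"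
proof -
  define W where "W = (\<Sum>\<sigma>\<in>configs U. factor_weight G inner_facs \<sigma>)"
  define K where "K = Z_out * pi_rest_weight a"
  have W: "0 < W" unfolding W_def using sum_inner_facs_weight_pos[of "{}"] by simp
  have gap: "(\<Sum>c\<in>UNIV. \<bar>marg1_weight (del_facs G {a}) y c - K * mu1 y c\<bar>)
      \<le> real (card (UNIV :: 'c set)) * (Z_out * W * (2 * tv * M ^ r))"
    unfolding K_def W_def by (intro sum_bounded_above marg1_weight_outer_approx[OF assms])
  have low: "Z_out * W * m ^ r \<le> (\<Sum>c\<in>UNIV. K * mu1 y c)"
    using pi_rest_weight_ge[of a] Z_out_pos
    unfolding K_def W_def by (simp add: sum_distrib_left[symmetric] mu1_sum mult.assoc)
  then have K: "0 < K"
    using W Z_out_pos m_pos by (simp add: mu1_sum sum_distrib_left[symmetric]) (smt (verit) mult_pos_pos zero_less_power)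
  have "(\<Sum>c\<in>UNIV. \<bar>msg_vf G y a c - mu1 y c\<bar>)
      \<le> 2 * (real (card (UNIV :: 'c set)) * (Z_out * W * (2 * tv * M ^ r))) / (Z_out * W * m ^ r)"
    unfolding msg_vf_def marg1_eq_normalized[of "del_facs G {a}", unfolded del_facs_simps, OF finite_vars]
    using sum_abs_normalized_diff_bound[OF _ _ _ gap _ low] marg1_weight_nonneg[OF fg_wf_del_facs[OF wf]]
      Z_out_pos W m_pos K mu1_bounds
    by (simp add: sum_distrib_left[symmetric] mu1_sum)
  also have "\<dots> = 4 * real (card (UNIV :: 'c set)) * tv * M ^ r / m ^ r"
    using Z_out_pos W by (simp add: field_simps)
  finally show ?thesis .
qed

theorem barmu_marg_L1:
  "(\<Sum>\<sigma>\<in>configs U. \<bar>barmu G U \<sigma> - marg G U \<sigma>\<bar>)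
     \<le> 2 * (real r * (4 * tv * M ^ r / m ^ r)) / q ^ r + 4 * tv * M ^ r / m ^ r"
  using sum_abs_diff_triangle[of "barmu G U" "marg G U" "configs U"
      "\<lambda>\<sigma>. pi_marg_weight \<sigma> / (\<Sum>\<sigma>'\<in>configs U. pi_marg_weight \<sigma>')"]
    barmu_L1 marg_pi_marg_weight_L1
  by (simp add: abs_minus_commute)

end

section \<open>Belief propagation at a single variable\<close>

locale single_cavity = bounded_cavity G "{x}" m M r for G :: "('v,'f,'c::finite) fg" and x m M r +
  fixes k :: nat
  assumes card_dvar: "card (dvar G x) \<le> r"
    and length_nb: "\<And>a. a \<in> dvar G x \<Longrightarrow> length (nb G a) \<le> k"
begin

definition "self_facs = {a\<in>dvar G x. set (nb G a) \<subseteq> {x}}"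
definition "null_facs = {a\<in>facs G. set (nb G a) = {}}"

definition "self_msg a c = psi G a (map (const_config {x} c) (nb G a))
  / (\<Sum>c'\<in>UNIV. psi G a (map (const_config {x} c') (nb G a)))"

definition "approx_msg b c = (if b \<in> B then pi_msg_norm b c else self_msg b c)"

lemma dvar_partition: "dvar G x = self_facs \<union> B" "self_facs \<inter> B = {}"
  by (auto simp: self_facs_def bdry_def dvar_def)

lemma inner_facs_partition: "inner_facs = self_facs \<union> null_facs" "self_facs \<inter> null_facs = {}"
  by (auto simp: self_facs_def inner_facs_def null_facs_def dvar_def subset_singleton_iff)

lemma finite_self_facs: "finite self_facs" and finite_null_facs: "finite null_facs"
  and finite_dvar: "finite (dvar G x)"
  using finite_facs by (auto simp: self_facs_def null_facs_def dvar_def)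

lemma xto_eq: "b \<in> B \<Longrightarrow> xto G b {x} = x"
  using xto_in_U by auto

lemma psi_dvar_bounds: "a \<in> dvar G x \<Longrightarrow> m \<le> psi G a (map \<rho> (nb G a)) \<and> psi G a (map \<rho> (nb G a)) \<le> M"
  using psi_bounds by (auto simp: dvar_def)

lemma self_msg_bounds:
  assumes "a \<in> dvar G x" shows "q \<le> self_msg a c \<and> self_msg a c \<le> 1"
proof -
  have "m \<le> psi G a (map (const_config {x} c) (nb G a)) \<and> psi G a (map (const_config {x} c) (nb G a)) \<le> M"
    for c using psi_dvar_bounds[OF assms] .
  from normalized_bounds[OF m_pos this] show ?thesis unfolding self_msg_def q_def .
qed

lemma approx_msg_bounds: "b \<in> dvar G x \<Longrightarrow> q \<le> approx_msg b c \<and> approx_msg b c \<le> 1"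
  unfolding approx_msg_def using pi_msg_norm_bounds self_msg_bounds by auto

lemma factor_weight_inner_facs:
  assumes "a \<in> dvar G x"
  shows "factor_weight G (inner_facs - {a}) (const_config {x} c)
     = factor_weight G null_facs (const_config {x} c) *
       (\<Prod>b\<in>self_facs - {a}. psi G b (map (const_config {x} c) (nb G b)))"
proof -
  have "inner_facs - {a} = null_facs \<union> (self_facs - {a})" "null_facs \<inter> (self_facs - {a}) = {}"
    using inner_facs_partition assms by (auto simp: null_facs_def dvar_def)
  then show ?thesis
    using finite_null_facs finite_self_facs factor_weight_Un[of null_facs "self_facs - {a}" G]
    by (simp add: factor_weight_def)
qed

lemma factor_weight_null_facs: "factor_weight G null_facs \<rho> = factor_weight G null_facs \<rho>'"
  by (rule factor_weight_cong) (auto simp: null_facs_def)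

lemma msg_fv_self: assumes "a \<in> self_facs" shows "msg_fv G a x c = self_msg a c"
proof -
  define D where "D = dvar G x - {a}"
  have D: "D \<inter> outer_facs = {}" "B - D = {}" "inner_facs - D = inner_facs - dvar G x \<union> {a}"
    using dvar_partition assms by (auto simp: D_def dvar_def outer_facs_def inner_facs_def self_facs_def)
  define \<kappa> where "\<kappa> = factor_weight G null_facs (const_config {x} c)"
  have "a \<notin> null_facs" "inner_facs - D = insert a null_facs"
    using assms inner_facs_partition dvar_partition
    by (auto simp: D_def null_facs_def self_facs_def dvar_def inner_facs_def)
  then have weight: "marg1_weight (del_facs G D) x s = Z_out * \<kappa> * psi G a (map (const_config {x} s) (nb G a))"
    for s
    using sum_weight_del_facs_eq[OF D(1), of "\<lambda>_. 1" "\<lambda>\<sigma>. if \<sigma> x = s then 1 else 0"]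
      sum_configs_singleton_indicator[of "factor_weight G (inner_facs - D)" x s]
      factor_weight_null_facs[of "const_config {x} s" "const_config {x} c"] finite_null_facs
    unfolding D(2) \<kappa>_def marg1_weight_def
    by (simp add: sum_nu factor_weight_insert mult_ac)
  have "0 < \<kappa>" unfolding \<kappa>_def by (rule factor_weight_pos) (auto simp: null_facs_def)
  then show ?thesis
    unfolding msg_fv_def D_def[symmetric] marg1_eq_normalized[of "del_facs G D", unfolded del_facs_simps, OF finite_vars]
      weight self_msg_def
    using Z_out_pos normalize_scale[of "Z_out * \<kappa>" "\<lambda>s. psi G a (map (const_config {x} s) (nb G a))"] by simp
qed

lemma bp_fv_self: assumes "a \<in> self_facs" shows "bp_fv G \<nu> a x c = self_msg a c"
proof -
  have nb: "set (nb G a) = {x}" using assms by (auto simp: self_facs_def dvar_def)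
  have "(\<Sum>\<tau>\<in>configs (set (nb G a)). if \<tau> x = s then psi G a (map \<tau> (nb G a)) *
        (\<Prod>y\<in>set (nb G a) - {x}. \<nu> y a (\<tau> y)) else 0)
      = psi G a (map (const_config {x} s) (nb G a))" for s
    using sum_configs_singleton_indicator[of "\<lambda>\<tau>. psi G a (map \<tau> (nb G a))" x s]
    unfolding nb by (simp add: if_distrib[of "(*) _"] cong: if_cong)
  then show ?thesis unfolding bp_fv_def self_msg_def Let_def by simp
qed

definition "bp_weight a \<nu> s = (\<Sum>\<tau>\<in>configs (set (nb G a) - {x}).
   psi_glued a (const_config {x} s) \<tau> * (\<Prod>y\<in>set (nb G a) - {x}. \<nu> y (\<tau> y)))"

lemma bp_fv_bdry:
  assumes "a \<in> B"
  shows "bp_fv G \<nu> a x c = bp_weight a (\<lambda>y. \<nu> y a) c / (\<Sum>s\<in>UNIV. bp_weight a (\<lambda>y. \<nu> y a) s)"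
proof -
  define A where "A = set (nb G a) - {x}"
  have split: "set (nb G a) = {x} \<union> A"
    using bdry_nb_inter_U[OF assms] xto_eq[OF assms] by (auto simp: A_def)
  have "(\<Sum>\<tau>\<in>configs (set (nb G a)). if \<tau> x = s then psi G a (map \<tau> (nb G a)) *
        (\<Prod>y\<in>A. \<nu> y a (\<tau> y)) else 0)
      = (\<Sum>\<sigma>\<in>configs {x}. \<Sum>\<tau>\<in>configs A. if override_on \<tau> \<sigma> {x} x = s
          then psi G a (map (override_on \<tau> \<sigma> {x}) (nb G a)) * (\<Prod>y\<in>A. \<nu> y a (override_on \<tau> \<sigma> {x} y))
          else 0)" for s
    unfolding split by (rule sum_configs_Un) (auto simp: A_def)
  also have "\<dots> s = (\<Sum>\<sigma>\<in>configs {x}. (\<Sum>\<tau>\<in>configs A. psi_glued a \<sigma> \<tau> * (\<Prod>y\<in>A. \<nu> y a (\<tau> y))) *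
          (if \<sigma> x = s then 1 else 0))" for s
    unfolding psi_glued_def sum_distrib_right
    by (intro sum.cong refl) (auto simp: A_def intro!: prod.cong)
  finally show ?thesis
    unfolding bp_fv_def bp_weight_def Let_def A_def sum_configs_singleton_indicator by simp
qed

lemma pi_msg_eq_bp_weight: "a \<in> B \<Longrightarrow> pi_msg a s = bp_weight a mu1 s"
  unfolding pi_msg_def psi_pi_def pi_Y_def bp_weight_def
  using expectation_prod_dist_marginal[OF finite_Y mu1_sum bdry_nb_subset_Y determined_by_psi_glued]
  by (simp add: prod_dist_def mult_ac)

lemma bp_weight_diff_le:
  assumes "a \<in> B" "0 \<le> \<delta>"
    and \<nu>: "\<And>y c. y \<in> set (nb G a) - {x} \<Longrightarrow> 0 \<le> \<nu> y c \<and> \<nu> y c \<le> 1 \<and> \<bar>\<nu> y c - mu1 y c\<bar> \<le> \<delta>"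
  shows "\<bar>bp_weight a \<nu> s - bp_weight a mu1 s\<bar> \<le> real (card (UNIV :: 'c set)) ^ k * (M * (real k * \<delta>))"
proof -
  define A where "A = set (nb G a) - {x}"
  have "a \<in> dvar G x" using assms(1) dvar_partition by auto
  then have card_A: "card A \<le> k"
    using length_nb[of a] card_mono[of "set (nb G a)" A] card_length[of "nb G a"] by (auto simp: A_def)
  have "\<bar>psi_glued a (const_config {x} s) \<tau> * ((\<Prod>y\<in>A. \<nu> y (\<tau> y)) - (\<Prod>y\<in>A. mu1 y (\<tau> y)))\<bar>
      \<le> M * (real k * \<delta>)" for \<tau>
  proof -
    have "\<bar>(\<Prod>y\<in>A. \<nu> y (\<tau> y)) - (\<Prod>y\<in>A. mu1 y (\<tau> y))\<bar> \<le> (\<Sum>y\<in>A. \<bar>\<nu> y (\<tau> y) - mu1 y (\<tau> y)\<bar>)"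
      using \<nu> mu1_bounds by (intro abs_prod_diff_le_sum) (auto simp: A_def)
    also have "\<dots> \<le> real (card A) * \<delta>"
      using \<nu> by (intro sum_bounded_above) (auto simp: A_def)
    also have "\<dots> \<le> real k * \<delta>" using card_A assms(2) by (intro mult_right_mono) auto
    finally show ?thesis
      using psi_glued_bounds[OF assms(1)] psi_glued_nonneg[OF assms(1)] M_ge_1 unfolding abs_mult
      by (intro mult_mono) auto
  qed
  then have "\<bar>bp_weight a \<nu> s - bp_weight a mu1 s\<bar> \<le> real (card (configs A :: ('v \<Rightarrow> 'c) set)) * (M * (real k * \<delta>))"
    unfolding bp_weight_def A_def[symmetric]
    by (simp add: sum_subtractf[symmetric] right_diff_distrib order_trans[OF sum_abs] sum_bounded_above)
  also have "\<dots> \<le> real (card (UNIV :: 'c set)) ^ k * (M * (real k * \<delta>))"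
    unfolding card_configs[OF finite_Diff[OF finite_set, of "nb G a" "{x}", folded A_def]]
    using card_A assms(2) M_ge_1 by (intro mult_right_mono) (auto simp: Suc_le_eq card_gt_0_iff power_increasing)
  finally show ?thesis .
qed

lemma msg_vf_bounds: "0 \<le> msg_vf G y a c \<and> msg_vf G y a c \<le> 1"
  unfolding msg_vf_def using marg1_bounds[OF fg_wf_del_facs[OF wf]] .

theorem pi_msg_norm_bp_fv_L1:
  assumes "a \<in> B"
  defines "\<delta> \<equiv> 4 * real (card (UNIV :: 'c set)) * tv * M ^ r / m ^ r"
  shows "(\<Sum>c\<in>UNIV. \<bar>pi_msg_norm a c - bp_fv G (msg_vf G) a x c\<bar>)
       \<le> 2 * (real (card (UNIV :: 'c set)) * (real (card (UNIV :: 'c set)) ^ k * (M * (real k * \<delta>)))) / m"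
proof -
  let ?w = "bp_weight a (\<lambda>y. msg_vf G y a)"
  have "\<bar>msg_vf G y a c - mu1 y c\<bar> \<le> \<delta>" if "y \<in> set (nb G a) - {x}" for y c
    using member_le_sum[of c UNIV "\<lambda>c. \<bar>msg_vf G y a c - mu1 y c\<bar>"] msg_vf_L1[OF assms(1), of y] that
    unfolding \<delta>_def by (meson Diff_iff UNIV_I abs_ge_zero finite order_trans singletonI)
  then have "\<bar>?w s - pi_msg a s\<bar> \<le> real (card (UNIV :: 'c set)) ^ k * (M * (real k * \<delta>))" for s
    unfolding pi_msg_eq_bp_weight[OF assms(1)] using msg_vf_bounds tv_nonneg m_pos M_ge_1
    by (intro bp_weight_diff_le[OF assms(1)]) (auto simp: \<delta>_def)
  then have gap: "(\<Sum>s\<in>UNIV. \<bar>?w s - pi_msg a s\<bar>)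
      \<le> real (card (UNIV :: 'c set)) * (real (card (UNIV :: 'c set)) ^ k * (M * (real k * \<delta>)))"
    by (intro sum_bounded_above)
  have "m \<le> (\<Sum>s\<in>UNIV. pi_msg a s)"
    using pi_msg_bounds[OF assms(1)] m_pos member_le_sum[of undefined UNIV "pi_msg a"]
    by (meson UNIV_I finite less_imp_le order_trans)
  moreover have "0 \<le> ?w s" for s
    unfolding bp_weight_def using psi_glued_nonneg[OF assms(1)] msg_vf_bounds
    by (intro sum_nonneg mult_nonneg_nonneg prod_nonneg) auto
  moreover have "0 \<le> pi_msg a c" for c
    using pi_msg_bounds[OF assms(1), of c] m_pos by linarith
  ultimately show ?thesis
    using sum_abs_normalized_diff_bound[OF _ _ _ gap m_pos]
    unfolding pi_msg_norm_def bp_fv_bdry[OF assms(1)] by (simp add: abs_minus_commute)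
qed

theorem msg_fv_bp_fv_L1:
  assumes "a \<in> dvar G x"
  shows "(\<Sum>c\<in>UNIV. \<bar>msg_fv G a x c - bp_fv G (msg_vf G) a x c\<bar>)
    \<le> 4 * tv * M ^ r / m ^ r + 2 * (real (card (UNIV :: 'c set)) * (real (card (UNIV :: 'c set)) ^ k *
         (M * (real k * (4 * real (card (UNIV :: 'c set)) * tv * M ^ r / m ^ r))))) / m"
    (is "_ \<le> ?fv + ?bp")
proof (cases "a \<in> B")
  case True
  have "(\<Sum>c\<in>UNIV. \<bar>msg_fv G a x c - bp_fv G (msg_vf G) a x c\<bar>)
      \<le> (\<Sum>c\<in>UNIV. \<bar>msg_fv G a x c - pi_msg_norm a c\<bar>) + (\<Sum>c\<in>UNIV. \<bar>pi_msg_norm a c - bp_fv G (msg_vf G) a x c\<bar>)"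
    by (rule sum_abs_diff_triangle)
  then show ?thesis
    using msg_fv_L1[OF True] pi_msg_norm_bp_fv_L1[OF True] unfolding xto_eq[OF True] by linarith
next
  case False
  then have "a \<in> self_facs" using assms dvar_partition by auto
  moreover have "0 \<le> ?fv" "0 \<le> ?bp" using tv_nonneg m_pos M_ge_1 by simp_all
  ultimately show ?thesis by (simp add: msg_fv_self bp_fv_self)
qed

lemma psi_self_facs_eq:
  assumes "b \<in> self_facs"
  shows "psi G b (map (const_config {x} c) (nb G b))
       = (\<Sum>c'\<in>UNIV. psi G b (map (const_config {x} c') (nb G b))) * approx_msg b c"
proof -
  have "b \<in> dvar G x" "b \<notin> B" using assms dvar_partition by blast+
  moreover have "0 < (\<Sum>c'\<in>UNIV. psi G b (map (const_config {x} c') (nb G b)))"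
    using psi_dvar_bounds[OF \<open>b \<in> dvar G x\<close>] m_pos by (intro sum_pos) (auto intro: less_le_trans)
  ultimately show ?thesis by (simp add: approx_msg_def self_msg_def)
qed

lemma psi_pi_bdry_eq:
  assumes "b \<in> B"
  shows "psi_pi b (const_config {x} c) = (\<Sum>c'\<in>UNIV. pi_msg b c') * approx_msg b c"
proof -
  have "psi_pi b (const_config {x} c) = pi_msg b c"
    using psi_pi_eq_pi_msg[OF assms] xto_eq[OF assms] by (simp add: const_config_def)
  moreover have "0 < (\<Sum>c'\<in>UNIV. pi_msg b c')"
    using pi_msg_bounds[OF assms] m_pos by (intro sum_pos) (auto intro: less_le_trans)
  ultimately show ?thesis using assms by (simp add: approx_msg_def pi_msg_norm_def)
qed

lemma pi_marg1_weight_single: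
  assumes "a \<in> dvar G x"
  obtains K where "0 < K" "\<And>c. pi_marg1_weight {a} x c = K * (\<Prod>b\<in>dvar G x - {a}. approx_msg b c)"
proof -
  define Z where "Z b = (\<Sum>c\<in>UNIV. psi G b (map (const_config {x} c) (nb G b)))" for b
  define S where "S b = (\<Sum>c\<in>UNIV. pi_msg b c)" for b
  define \<kappa> where "\<kappa> = factor_weight G null_facs (const_config {x} undefined)"
  have dvar_a: "dvar G x - {a} = (self_facs - {a}) \<union> (B - {a})" "(self_facs - {a}) \<inter> (B - {a}) = {}"
    using dvar_partition by auto
  have "pi_marg1_weight {a} x c = factor_weight G (inner_facs - {a}) (const_config {x} c) *
      (\<Prod>b\<in>B - {a}. psi_pi b (const_config {x} c))" for c
    unfolding pi_marg1_weight_def expectation_pi_Y_bdry_weight[OF Diff_subset]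
    using sum_configs_singleton_indicator[of "\<lambda>\<sigma>. factor_weight G (inner_facs - {a}) \<sigma> *
      (\<Prod>b\<in>B - {a}. psi_pi b \<sigma>)" x c]
    by (simp add: mult_ac)
  also have "\<dots> c = \<kappa> * (\<Prod>b\<in>self_facs - {a}. Z b * approx_msg b c) * (\<Prod>b\<in>B - {a}. S b * approx_msg b c)"
    for c
    unfolding factor_weight_inner_facs[OF assms] \<kappa>_def Z_def S_def
    using factor_weight_null_facs[of "const_config {x} c" "const_config {x} undefined"]
    by (simp add: psi_self_facs_eq psi_pi_bdry_eq)
  also have "\<dots> c = \<kappa> * (\<Prod>b\<in>self_facs - {a}. Z b) * (\<Prod>b\<in>B - {a}. S b)
      * (\<Prod>b\<in>dvar G x - {a}. approx_msg b c)" for c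
    using prod.union_disjoint[of "self_facs - {a}" "B - {a}" "\<lambda>b. approx_msg b c"]
      finite_self_facs finite_bdry dvar_a
    by (simp add: prod.distrib mult_ac)
  finally have "pi_marg1_weight {a} x c = \<kappa> * (\<Prod>b\<in>self_facs - {a}. Z b) * (\<Prod>b\<in>B - {a}. S b)
      * (\<Prod>b\<in>dvar G x - {a}. approx_msg b c)" for c .
  moreover have "0 < \<kappa> * (\<Prod>b\<in>self_facs - {a}. Z b) * (\<Prod>b\<in>B - {a}. S b)"
    unfolding \<kappa>_def Z_def S_def using psi_dvar_bounds pi_msg_bounds m_pos dvar_partition
    by (intro mult_pos_pos prod_pos sum_pos factor_weight_pos)
       (auto simp: null_facs_def intro: less_le_trans)
  ultimately show ?thesis using that by blast
qed

lemma msg_fv_approx_msg_diff_le: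
  assumes "b \<in> dvar G x"
  shows "\<bar>msg_fv G b x c - approx_msg b c\<bar> \<le> 4 * tv * M ^ r / m ^ r"
proof -
  consider "b \<in> B" | "b \<in> self_facs" "b \<notin> B" using assms dvar_partition by auto
  then show ?thesis
    by cases (use msg_fv_diff_le xto_eq msg_fv_self tv_nonneg m_pos M_ge_1 in \<open>auto simp: approx_msg_def\<close>)
qed

lemma prod_msg_fv_approx_msg_diff_le:
  "\<bar>(\<Prod>b\<in>dvar G x - {a}. msg_fv G b x c) - (\<Prod>b\<in>dvar G x - {a}. approx_msg b c)\<bar>
     \<le> real r * (4 * tv * M ^ r / m ^ r)"
proof -
  have "\<bar>(\<Prod>b\<in>dvar G x - {a}. msg_fv G b x c) - (\<Prod>b\<in>dvar G x - {a}. approx_msg b c)\<bar>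
      \<le> (\<Sum>b\<in>dvar G x - {a}. \<bar>msg_fv G b x c - approx_msg b c\<bar>)"
    using msg_fv_bounds approx_msg_bounds q_pos finite_dvar
    by (intro abs_prod_diff_le_sum) (auto intro: order_trans[OF less_imp_le])
  also have "\<dots> \<le> real (card (dvar G x - {a})) * (4 * tv * M ^ r / m ^ r)"
    using msg_fv_approx_msg_diff_le by (intro sum_bounded_above) auto
  also have "\<dots> \<le> real r * (4 * tv * M ^ r / m ^ r)"
    using card_dvar card_mono[OF finite_dvar, of "dvar G x - {a}"] tv_nonneg m_pos M_ge_1
    by (intro mult_right_mono) auto
  finally show ?thesis .
qed

theorem msg_vf_bp_vf_L1:
  assumes "a \<in> dvar G x"
  shows "(\<Sum>c\<in>UNIV. \<bar>msg_vf G x a c - bp_vf G (msg_fv G) x a c\<bar>)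
    \<le> 4 * tv * M ^ r / m ^ r + 2 * (real (card (UNIV :: 'c set)) * (real r * (4 * tv * M ^ r / m ^ r))) / q ^ r"
proof -
  define T where "T c = (\<Prod>b\<in>dvar G x - {a}. approx_msg b c)" for c
  define g where "g c = (\<Prod>b\<in>dvar G x - {a}. msg_fv G b x c)" for c
  obtain K where K: "0 < K" "\<And>c. pi_marg1_weight {a} x c = K * T c"
    using pi_marg1_weight_single[OF assms] unfolding T_def by blast
  have "{a} \<inter> outer_facs = {}" using assms by (auto simp: dvar_def outer_facs_def)
  then have approx: "(\<Sum>c\<in>UNIV. \<bar>msg_vf G x a c - T c / sum T UNIV\<bar>) \<le> 4 * tv * M ^ r / m ^ r"
    using marg1_del_facs_L1[of x "{a}"] normalize_scale[of K T] K unfolding msg_vf_def by simp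
  have gap: "(\<Sum>c\<in>UNIV. \<bar>g c - T c\<bar>) \<le> real (card (UNIV :: 'c set)) * (real r * (4 * tv * M ^ r / m ^ r))"
    unfolding g_def T_def by (intro sum_bounded_above prod_msg_fv_approx_msg_diff_le)
  have T: "q ^ r \<le> T c" for c
    unfolding T_def using finite_dvar card_dvar card_mono[OF finite_dvar, of "dvar G x - {a}"]
      approx_msg_bounds q_pos q_le_1
    by (intro power_card_le_prod) auto
  then have "q ^ r \<le> sum T UNIV"
    using member_le_sum[of undefined UNIV T] q_pos by (meson UNIV_I finite order_trans zero_le_power less_imp_le)
  moreover have "0 \<le> g c" for c
    unfolding g_def using msg_fv_bounds by (intro prod_nonneg) auto
  moreover have "0 \<le> T c" for c using T[of c] q_pos by (meson order_trans zero_le_power less_imp_le)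
  ultimately have "(\<Sum>c\<in>UNIV. \<bar>g c / sum g UNIV - T c / sum T UNIV\<bar>)
      \<le> 2 * (real (card (UNIV :: 'c set)) * (real r * (4 * tv * M ^ r / m ^ r))) / q ^ r"
    using gap q_pos by (intro sum_abs_normalized_diff_bound) auto
  moreover have "bp_vf G (msg_fv G) x a c = g c / sum g UNIV" for c
    unfolding bp_vf_def g_def Let_def ..
  ultimately show ?thesis
    using sum_abs_diff_triangle[of "msg_vf G x a" "bp_vf G (msg_fv G) x a" UNIV "\<lambda>c. T c / sum T UNIV"] approx
    by (simp add: abs_minus_commute)
qed

theorem bp_L1:
  "(\<Sum>a\<in>dvar G x. \<Sum>c\<in>UNIV. \<bar>msg_vf G x a c - bp_vf G (msg_fv G) x a c\<bar> +
       \<bar>msg_fv G a x c - bp_fv G (msg_vf G) a x c\<bar>)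
   \<le> real r * ((4 * tv * M ^ r / m ^ r + 2 * (real (card (UNIV :: 'c set)) * (real r * (4 * tv * M ^ r / m ^ r))) / q ^ r)
     + (4 * tv * M ^ r / m ^ r + 2 * (real (card (UNIV :: 'c set)) * (real (card (UNIV :: 'c set)) ^ k *
         (M * (real k * (4 * real (card (UNIV :: 'c set)) * tv * M ^ r / m ^ r))))) / m))"
  (is "_ \<le> real r * (?vf + ?fv)")
proof -
  have "(\<Sum>a\<in>dvar G x. \<Sum>c\<in>UNIV. \<bar>msg_vf G x a c - bp_vf G (msg_fv G) x a c\<bar> +
       \<bar>msg_fv G a x c - bp_fv G (msg_vf G) a x c\<bar>) \<le> real (card (dvar G x)) * (?vf + ?fv)"
  proof (rule sum_bounded_above)
    fix a assume "a \<in> dvar G x"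
    then show "(\<Sum>c\<in>UNIV. \<bar>msg_vf G x a c - bp_vf G (msg_fv G) x a c\<bar> +
        \<bar>msg_fv G a x c - bp_fv G (msg_vf G) a x c\<bar>) \<le> ?vf + ?fv"
      unfolding sum.distrib by (intro add_mono msg_vf_bp_vf_L1 msg_fv_bp_fv_L1)
  qed
  also have "\<dots> \<le> real r * (?vf + ?fv)"
    using card_dvar tv_nonneg m_pos M_ge_1 q_pos by (intro mult_right_mono) auto
  finally show ?thesis .
qed

end

definition marg_const :: "real \<Rightarrow> real \<Rightarrow> nat \<Rightarrow> real \<Rightarrow> real" where
  "marg_const m M r C = 2 * (real r * (4 * M ^ r / m ^ r)) / (m / (C * M)) ^ r + 4 * M ^ r / m ^ r"

definition bp_const :: "real \<Rightarrow> real \<Rightarrow> nat \<Rightarrow> nat \<Rightarrow> real \<Rightarrow> real" where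
  "bp_const m M r k C = real r * ((4 * M ^ r / m ^ r + 2 * (C * (real r * (4 * M ^ r / m ^ r))) / (m / (C * M)) ^ r)
     + (4 * M ^ r / m ^ r + 2 * (C * (C ^ k * (M * (real k * (4 * C * M ^ r / m ^ r))))) / m))"

lemma marg_const_nonneg: "0 < m \<Longrightarrow> 0 < M \<Longrightarrow> 0 < C \<Longrightarrow> 0 \<le> marg_const m M r C"
  unfolding marg_const_def by simp

lemma bp_const_nonneg: "0 < m \<Longrightarrow> 0 < M \<Longrightarrow> 0 < C \<Longrightarrow> 0 \<le> bp_const m M r k C"
  unfolding bp_const_def by simp

lemma tv_prod_nonneg: "0 \<le> tv_prod G Y"
  unfolding tv_prod_def by (simp add: sum_nonneg)

lemma barmu_marg_bound:
  fixes G :: "('v,'f,'c::finite) fg"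
  assumes "fg_wf G" "cavity G U" "0 < m" "m \<le> 1" "1 \<le> M" "card (bdry G U) \<le> r"
    and "\<And>a \<rho>. a \<in> facs G \<Longrightarrow> set (nb G a) \<inter> U \<noteq> {} \<Longrightarrow>
          m \<le> psi G a (map \<rho> (nb G a)) \<and> psi G a (map \<rho> (nb G a)) \<le> M"
  shows "(\<Sum>\<sigma>\<in>configs U. \<bar>barmu G U \<sigma> - marg G U \<sigma>\<bar>)
    \<le> tv_prod (del_facs G (bdry G U)) (dist2 G U) * marg_const m M r (card (UNIV :: 'c set))"
proof -
  interpret bounded_cavity G U m M r
    using assms by unfold_locales auto
  show ?thesis
    using barmu_marg_L1 unfolding marg_const_def tv_def[symmetric] q_def[symmetric]
    by (simp add: algebra_simps)
qed

lemma bp_bound: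
  fixes G :: "('v,'f,'c::finite) fg"
  assumes "fg_wf G" "cavity G {x}" "0 < m" "m \<le> 1" "1 \<le> M" "card (dvar G x) \<le> r"
    and "\<And>a. a \<in> dvar G x \<Longrightarrow> length (nb G a) \<le> k"
    and "\<And>a \<rho>. a \<in> dvar G x \<Longrightarrow> m \<le> psi G a (map \<rho> (nb G a)) \<and> psi G a (map \<rho> (nb G a)) \<le> M"
  shows "(\<Sum>a\<in>dvar G x. \<Sum>c\<in>UNIV. \<bar>msg_vf G x a c - bp_vf G (msg_fv G) x a c\<bar> +
       \<bar>msg_fv G a x c - bp_fv G (msg_vf G) a x c\<bar>)
    \<le> tv_prod (del_facs G (bdry G {x})) (dist2 G {x}) * bp_const m M r k (card (UNIV :: 'c set))"
proof -
  have "card (bdry G {x}) \<le> r"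
    using assms(1,6) card_mono[of "dvar G x" "bdry G {x}"]
    by (force simp: fg_wf_def dvar_def bdry_def)
  moreover have "a \<in> dvar G x" if "a \<in> facs G" "set (nb G a) \<inter> {x} \<noteq> {}" for a
    using that by (auto simp: dvar_def)
  ultimately interpret single_cavity G x m M r k
    using assms by unfold_locales auto
  show ?thesis
    using bp_L1 unfolding bp_const_def tv_def[symmetric] q_def[symmetric]
    by (simp add: algebra_simps)
qed

lemma finite_family_bounds:
  fixes Psi :: "('c::finite list \<Rightarrow> real) set"
  assumes "finite Psi" "\<forall>\<psi>\<in>Psi. \<forall>\<tau>. length \<tau> = k \<longrightarrow> \<psi> \<tau> > 0"
  obtains m M where "0 < m" "m \<le> 1" "1 \<le> M"
    "\<forall>\<psi>\<in>Psi. \<forall>\<tau>. length \<tau> = k \<longrightarrow> m \<le> \<psi> \<tau> \<and> \<psi> \<tau> \<le> M"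
proof -
  define S where "S = insert 1 ((\<lambda>(\<psi>, \<tau>). \<psi> \<tau>) ` (Psi \<times> {\<tau> :: 'c list. length \<tau> = k}))"
  have "finite {\<tau> :: 'c list. length \<tau> = k}"
    using finite_lists_length_eq[of "UNIV :: 'c set" k] by simp
  then have S: "finite S" "S \<noteq> {}" unfolding S_def using assms(1) by auto
  have "0 < Min S" using Min_in[OF S] assms(2) unfolding S_def by auto
  moreover have "Min S \<le> s \<and> s \<le> Max S" if "s \<in> S" for s
    using Min_le[OF S(1) that] Max_ge[OF S(1) that] by simp
  ultimately show ?thesis
    by (intro that[of "Min S" "Max S"]) (auto simp: S_def)
qed

lemma psi_in_bounds:
  assumes "psi_in G k Psi a" "\<forall>\<psi>\<in>Psi. \<forall>\<tau>. length \<tau> = k \<longrightarrow> m \<le> \<psi> \<tau> \<and> \<psi> \<tau> \<le> M"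
  shows "m \<le> psi G a (map \<rho> (nb G a)) \<and> psi G a (map \<rho> (nb G a)) \<le> M"
  using assms unfolding psi_in_def by auto

lemma less_if_le_small_mult:
  fixes t c L S \<epsilon> :: real
  assumes "0 \<le> t" "t < \<epsilon> / (c + 1)" "0 \<le> L" "L \<le> c" "S \<le> t * L"
  shows "S < \<epsilon>"
proof -
  have "t * L \<le> t * c" using assms by (intro mult_left_mono) auto
  also have "\<dots> < \<epsilon>"
    using assms by (simp add: field_simps)
  finally show ?thesis using assms(5) by linarith
qed

theorem lemma3p6:
  fixes Psi :: "('c::finite list \<Rightarrow> real) set" and k :: nat
  assumes "k \<ge> 2" and "finite Psi"
    and "\<forall>\<psi>\<in>Psi. \<forall>\<tau>. length \<tau> = k \<longrightarrow> \<psi> \<tau> > 0"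
  shows "\<forall>\<epsilon>>0. \<forall>R>(0::real). \<exists>\<epsilon>'>0.
    (\<forall>(G :: (nat, nat, 'c) fg) U.
       fg_wf G \<and> cavity G U \<and> real (card U) \<le> R \<and> real (card (bdry G U)) \<le> R \<and>
       (\<forall>a\<in>facs G. set (nb G a) \<inter> U \<noteq> {} \<longrightarrow> psi_in G k Psi a) \<and>
       tv_prod (del_facs G (bdry G U)) (dist2 G U) < \<epsilon>'
       \<longrightarrow> (\<Sum>\<sigma>\<in>configs U. \<bar>barmu G U \<sigma> - marg G U \<sigma>\<bar>) < \<epsilon>) \<and>
    (\<forall>(G :: (nat, nat, 'c) fg) x.
       fg_wf G \<and> cavity G {x} \<and> real (card (dvar G x)) \<le> R \<and>
       (\<forall>a\<in>dvar G x. psi_in G k Psi a) \<and>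
       tv_prod (del_facs G (bdry G {x})) (dist2 G {x}) < \<epsilon>'
       \<longrightarrow> (\<Sum>a\<in>dvar G x. \<Sum>c\<in>UNIV.
              \<bar>msg_vf G x a c - bp_vf G (msg_fv G) x a c\<bar> +
              \<bar>msg_fv G a x c - bp_fv G (msg_vf G) a x c\<bar>) < \<epsilon>)"
proof -
  obtain m M where m: "0 < m" "m \<le> 1" "1 \<le> M"
    and Psi: "\<forall>\<psi>\<in>Psi. \<forall>\<tau>. length \<tau> = k \<longrightarrow> m \<le> \<psi> \<tau> \<and> \<psi> \<tau> \<le> M"
    using finite_family_bounds[OF assms(2,3)] by blast
  define K where "K R = marg_const m M (nat \<lceil>R\<rceil>) (card (UNIV :: 'c set))
    + bp_const m M (nat \<lceil>R\<rceil>) k (card (UNIV :: 'c set))" for R :: real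
  have K: "0 \<le> marg_const m M r (card (UNIV :: 'c set))" "0 \<le> bp_const m M r k (card (UNIV :: 'c set))"
    for r using m by (simp_all add: marg_const_nonneg bp_const_nonneg card_gt_0_iff)
  have ceiling: "real n \<le> R \<Longrightarrow> n \<le> nat \<lceil>R\<rceil>" for n :: nat and R :: real by linarith
  show ?thesis
    apply (intro allI impI)
    subgoal for \<epsilon> R
      apply (rule exI[of _ "\<epsilon> / (K R + 1)"])
      apply (intro conjI allI impI)
      subgoal using K[of "nat \<lceil>R\<rceil>"] by (simp add: K_def add_nonneg_pos)
      subgoal for G U
        apply (elim conjE)
        apply (rule less_if_le_small_mult[OF tv_prod_nonneg _ K(1)[of "nat \<lceil>R\<rceil>"], where c = "K R"])
          apply assumption
         apply (simp add: K_def K(2))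
        apply (rule barmu_marg_bound)
        using m ceiling by (simp_all add: psi_in_bounds[OF _ Psi])
      subgoal for G x
        apply (elim conjE)
        apply (rule less_if_le_small_mult[OF tv_prod_nonneg _ K(2)[of "nat \<lceil>R\<rceil>"], where c = "K R"])
          apply assumption
         apply (simp add: K_def K(1))
        apply (rule bp_bound)
        using m ceiling by (simp_all add: psi_in_bounds[OF _ Psi] psi_in_def)
      done
    done
qed

end
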